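(* Let $A\in\mathcal L(W,V)\setminus\Sigma$ be injective and let $L:=\operatorname{Image}(A)\in\mathrm{Gr}(V,m)$. (a) If $L\cap\operatorname{int}(K)\neq\emptyset$, then $$\frac{1}{\|A\|}\le\frac{\operatorname{dist}(L,\Sigma_m)}{\mathrm{Rdist}(A,\Sigma)}\le\|A^{-1}\|,$$ equivalently $\frac{1}{\operatorname{dist}(L,\Sigma_m)}\le\frac{\|A\|}{\mathrm{Rdist}(A,\Sigma)}\le\frac{\kappa(A)}{\operatorname{dist}(L,\Sigma_m)}$, where $\kappa(A):=\|A\|\cdot\|A^{-1}\|$. (b) If $L^\perp\cap\operatorname{int}(K^* )\neq\emptyset$, then $$\frac{1}{\|A\|}\le\frac{\overline{\operatorname{dist}}(\Sigma_m,L)}{\mathrm{Rdist}(A,\Sigma)}\le\|A^{-1}\|,$$ equivalently $\frac{1}{\overline{\operatorname{dist}}(\Sigma_m,L)}\le\frac{\|A\|}{\mathrm{Rdist}(A,\Sigma)}\le\frac{\kappa(A)}{\overline{\operatorname{dist}}(\Sigma_m,L)}$.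
   Context: $V$ is a finite-dimensional real vector space with inner product $\langle\cdot,\cdot\rangle$, $K\subseteq V$ a regular closed convex cone (closed, convex, pointed, nonempty interior) with dual cone $K^*:=\{u:\langle u,x\rangle\ge0\ \forall x\in K\}$; $L^\perp$ is the orthogonal complement. $\|\cdot\|,|||\cdot|||$ are two arbitrary norms on $V$. $\mathrm{Gr}(V,m)$ is the set of $m$-dimensional subspaces of $V$, $1\le m<\dim V$. For $L_1,L_2\in\mathrm{Gr}(V,m)$: $\operatorname{dist}(L_1,L_2):=\max_{x\in L_1,x\neq0}\min_{v\in L_2}\frac{|||x-v|||}{\|x\|}$, $\overline{\operatorname{dist}}(L_1,L_2):=\max_{x\in L_1,x\neq0}\inf_{v\in L_2,v\neq0}\frac{|||x-v|||}{\|v\|}$. $\Sigma_m:=\{L\in\mathrm{Gr}(V,m):L\cap K\neq\{0\},\ L^\perp\cap K^*\neq\{0\}\}$, $\operatorname{dist}(L,\Sigma_m):=\inf_{\tilde L\in\Sigma_m}\operatorname{dist}(L,\tilde L)$, $\overline{\operatorname{dist}}(\Sigma_m,L):=\inf_{\tilde L\in\Sigma_m}\overline{\operatorname{dist}}(\tilde L,L)$. $W$ is a finite-dimensional real inner product space with $\dim W<\dim V$, equipped with a norm $|\cdot|$. $\mathcal L(W,V)$ is the set of linear maps $W\to V$; for $A\in\mathcal L(W,V)$, $A^*:V\to W$ is its adjoint, $\|A\|:=\max_{|w|=1}\|Aw\|$, $|||A|||:=\max_{|w|=1}|||Aw|||$, and for injective $A$, $\|A^{-1}\|:=\max_{x\in\operatorname{Image}(A),\|x\|=1}|A^{-1}x|$.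 $A$ is well-posed if one of the systems "$Ax\in K\setminus\{0\}$ for some $x\in W$" or "$A^*u=0$ for some $u\in K^*\setminus\{0\}$" is feasible and remains feasible for all $\tilde A$ sufficiently close to $A$; $\Sigma\subseteq\mathcal L(W,V)$ is the set of mappings that are not well-posed, and $\mathrm{Rdist}(A,\Sigma):=\inf\{|||A-\tilde A|||:\tilde A\in\Sigma\}$. *)

theory Defs
  imports "HOL-Analysis.Analysis"
begin

definition is_norm :: "('a::real_vector \<Rightarrow> real) \<Rightarrow> bool" where
  "is_norm N \<longleftrightarrow> (\<forall>x. 0 \<le> N x) \<and> (\<forall>x. N x = 0 \<longleftrightarrow> x = 0)
     \<and> (\<forall>c x. N (c *\<^sub>R x) = \<bar>c\<bar> * N x) \<and> (\<forall>x y. N (x + y) \<le> N x + N y)"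

definition regular_cone :: "'a::euclidean_space set \<Rightarrow> bool" where
  "regular_cone K \<longleftrightarrow> closed K \<and> convex K \<and> cone K \<and> K \<noteq> {}
     \<and> K \<inter> uminus ` K \<subseteq> {0} \<and> interior K \<noteq> {}"

definition dual_cone :: "'a::euclidean_space set \<Rightarrow> 'a set" where
  "dual_cone K = {u. \<forall>x\<in>K. inner u x \<ge> 0}"

definition Gr :: "nat \<Rightarrow> 'a::euclidean_space set set" where
  "Gr m = {L. subspace L \<and> dim L = m}"

definition subsp_dist :: "('a::euclidean_space \<Rightarrow> real) \<Rightarrow> ('a \<Rightarrow> real) \<Rightarrow> 'a set \<Rightarrow> 'a set \<Rightarrow> real" where
  "subsp_dist n1 n2 L1 L2 = (SUP x\<in>L1 - {0}. INF v\<in>L2. n2 (x - v) / n1 x)"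

definition subsp_distbar :: "('a::euclidean_space \<Rightarrow> real) \<Rightarrow> ('a \<Rightarrow> real) \<Rightarrow> 'a set \<Rightarrow> 'a set \<Rightarrow> real" where
  "subsp_distbar n1 n2 L1 L2 = (SUP x\<in>L1 - {0}. INF v\<in>L2 - {0}. n2 (x - v) / n1 v)"

definition Sigma_m :: "'a::euclidean_space set \<Rightarrow> nat \<Rightarrow> 'a set set" where
  "Sigma_m K m = {L \<in> Gr m. L \<inter> K \<noteq> {0} \<and> orthogonal_comp L \<inter> dual_cone K \<noteq> {0}}"

definition dist_to_Sigma_m :: "('a::euclidean_space \<Rightarrow> real) \<Rightarrow> ('a \<Rightarrow> real) \<Rightarrow> 'a set \<Rightarrow> nat \<Rightarrow> 'a set \<Rightarrow> real" where
  "dist_to_Sigma_m n1 n2 K m L = (INF L'\<in>Sigma_m K m. subsp_dist n1 n2 L L')"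

definition distbar_from_Sigma_m :: "('a::euclidean_space \<Rightarrow> real) \<Rightarrow> ('a \<Rightarrow> real) \<Rightarrow> 'a set \<Rightarrow> nat \<Rightarrow> 'a set \<Rightarrow> real" where
  "distbar_from_Sigma_m n1 n2 K m L = (INF L'\<in>Sigma_m K m. subsp_distbar n1 n2 L' L)"

definition opnorm :: "('w::real_vector \<Rightarrow> real) \<Rightarrow> ('v \<Rightarrow> real) \<Rightarrow> ('w \<Rightarrow> 'v) \<Rightarrow> real" where
  "opnorm M N A = (SUP w\<in>{w. M w = 1}. N (A w))"

definition inv_opnorm :: "('w::real_vector \<Rightarrow> real) \<Rightarrow> ('v \<Rightarrow> real) \<Rightarrow> ('w \<Rightarrow> 'v) \<Rightarrow> real" where
  "inv_opnorm M N A = (SUP x\<in>{x \<in> range A. N x = 1}. M (inv A x))"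

definition primal_feasible :: "'v::euclidean_space set \<Rightarrow> ('w::euclidean_space \<Rightarrow> 'v) \<Rightarrow> bool" where
  "primal_feasible K A \<longleftrightarrow> (\<exists>x. A x \<in> K - {0})"

definition dual_feasible :: "'v::euclidean_space set \<Rightarrow> ('w::euclidean_space \<Rightarrow> 'v) \<Rightarrow> bool" where
  "dual_feasible K A \<longleftrightarrow> (\<exists>u \<in> dual_cone K - {0}. adjoint A u = 0)"

text \<open>Well-posedness: one of the systems is feasible and remains feasible for all
  linear maps sufficiently close to A (closeness measured in the operator norm
  induced by |.| and |||.|||; all norms on L(W,V) are equivalent).\<close>
definition well_posed :: "('w::euclidean_space \<Rightarrow> real) \<Rightarrow> ('v::euclidean_space \<Rightarrow> real) \<Rightarrow> 'v set \<Rightarrow> ('w \<Rightarrow> 'v) \<Rightarrow> bool" where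
  "well_posed nW n2 K A \<longleftrightarrow>
     (\<exists>\<epsilon>>0. \<forall>A'. linear A' \<and> opnorm nW n2 (\<lambda>w. A' w - A w) < \<epsilon> \<longrightarrow> primal_feasible K A')
   \<or> (\<exists>\<epsilon>>0. \<forall>A'. linear A' \<and> opnorm nW n2 (\<lambda>w. A' w - A w) < \<epsilon> \<longrightarrow> dual_feasible K A')"

definition ill_posed_set :: "('w::euclidean_space \<Rightarrow> real) \<Rightarrow> ('v::euclidean_space \<Rightarrow> real) \<Rightarrow> 'v set \<Rightarrow> ('w \<Rightarrow> 'v) set" where
  "ill_posed_set nW n2 K = {A. linear A \<and> \<not> well_posed nW n2 K A}"

definition Rdist :: "('w::euclidean_space \<Rightarrow> real) \<Rightarrow> ('v::euclidean_space \<Rightarrow> real) \<Rightarrow> 'v set \<Rightarrow> ('w \<Rightarrow> 'v) \<Rightarrow> real" where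
  "Rdist nW n2 K A = (INF A'\<in>ill_posed_set nW n2 K. opnorm nW n2 (\<lambda>w. A w - A' w))"

end

theory Submission
  imports Defs
begin

text \<open>Write \<open>R\<close> for the distance from \<open>A\<close> to the ill-posed maps. Being robustly primal feasible
  and being robustly dual feasible are disjoint open conditions, so a segment of linear maps whose
  endpoints differ in either of them meets the ill-posed set. Given \<open>L' \<in> \<Sigma>\<^sub>m\<close>, a rank-one
  perturbation of \<open>A\<close> of norm at most \<open>\<parallel>A\<parallel>\<close> times the distance between \<open>L\<close> and \<open>L'\<close> switches this
  status: in case (a) it pushes the range of \<open>A\<close> into a hyperplane supporting the dual cone, in
  case (b) it sends a point of the range onto a point of \<open>L' \<inter> K\<close>. This bounds \<open>R\<close> from above.
  Conversely, the range of every ill-posed \<open>B\<close> lies in some member of \<open>\<Sigma>\<^sub>m\<close> (by a Gordan-type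
  alternative and a dimension count), or \<open>B\<close> has a kernel, and comparing \<open>A w\<close> with \<open>B w\<close> bounds
  the distances to \<open>\<Sigma>\<^sub>m\<close> by \<open>\<parallel>A\<^sup>-\<^sup>1\<parallel> |||A - B|||\<close>.\<close>

section \<open>Norms given as functions\<close>

lemma is_normD:
  assumes "is_norm N"
  shows "N x \<ge> 0" "N x = 0 \<longleftrightarrow> x = 0" "N (c *\<^sub>R x) = \<bar>c\<bar> * N x" "N (x + y) \<le> N x + N y"
  using assms unfolding is_norm_def by auto

lemma is_norm_zero: "is_norm N \<Longrightarrow> N 0 = 0"
  using is_normD(2) by blast

lemma is_norm_pos: "is_norm N \<Longrightarrow> x \<noteq> 0 \<Longrightarrow> N x > 0"
  using is_normD(1,2) by (metis less_eq_real_def)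

lemma is_norm_minus: "is_norm N \<Longrightarrow> N (- x) = N x"
  using is_normD(3)[of N "-1" x] by simp

lemma is_norm_minus_commute: "is_norm N \<Longrightarrow> N (x - y) = N (y - x)"
  using is_norm_minus[of N "x - y"] by simp

lemma is_norm_triangle_diff: "is_norm N \<Longrightarrow> N (x - y) \<le> N x + N y"
  using is_normD(4)[of N x "-y"] is_norm_minus[of N y] by simp

lemma is_norm_reverse_triangle: "is_norm N \<Longrightarrow> \<bar>N x - N y\<bar> \<le> N (x - y)"
  using is_normD(4)[of N "x - y" y] is_normD(4)[of N "y - x" x] is_norm_minus_commute[of N x y]
  by (simp add: abs_le_iff)

lemma is_norm_sum: "is_norm N \<Longrightarrow> N (sum f S) \<le> (\<Sum>i\<in>S. N (f i))"
proof (induction S rule: infinite_finite_induct)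
  case (insert x F)
  then show ?case using is_normD(4)[OF insert(4), of "f x" "sum f F"] by simp
qed (simp_all add: is_norm_zero)

lemma is_norm_norm: "is_norm (norm :: 'a::real_normed_vector \<Rightarrow> real)"
  unfolding is_norm_def by (auto simp: norm_triangle_ineq)

lemma is_norm_upper_bound:
  fixes N :: "'a::euclidean_space \<Rightarrow> real"
  assumes n: "is_norm N"
  obtains C where "C > 0" "\<And>x. N x \<le> C * norm x"
proof
  define C where "C = 1 + (\<Sum>b\<in>Basis. N b)"
  show "C > 0" unfolding C_def using is_normD(1)[OF n] by (simp add: add_pos_nonneg sum_nonneg)
  fix x
  have "N x = N (\<Sum>b\<in>Basis. (x \<bullet> b) *\<^sub>R b)" by (simp add: euclidean_representation)
  also have "\<dots> \<le> (\<Sum>b\<in>Basis. N ((x \<bullet> b) *\<^sub>R b))" by (rule is_norm_sum[OF n])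
  also have "\<dots> = (\<Sum>b\<in>Basis. \<bar>x \<bullet> b\<bar> * N b)" using is_normD(3)[OF n] by simp
  also have "\<dots> \<le> (\<Sum>b\<in>Basis. norm x * N b)"
    by (intro sum_mono mult_right_mono) (auto simp: Basis_le_norm is_normD(1)[OF n])
  also have "\<dots> \<le> C * norm x" unfolding C_def by (simp add: sum_distrib_left algebra_simps)
  finally show "N x \<le> C * norm x" .
qed

lemma is_norm_continuous_on:
  fixes N :: "'a::euclidean_space \<Rightarrow> real"
  assumes n: "is_norm N"
  shows "continuous_on S N"
proof -
  obtain C where C: "C > 0" "\<And>x. N x \<le> C * norm x" using is_norm_upper_bound[OF n] by blast
  have "lipschitz_on C UNIV N"
    using is_norm_reverse_triangle[OF n] C by (intro lipschitz_onI) (auto simp: dist_norm intro: order_trans)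
  then show ?thesis using lipschitz_on_continuous_on continuous_on_subset by blast
qed

lemma is_norm_lower_bound:
  fixes N :: "'a::euclidean_space \<Rightarrow> real"
  assumes n: "is_norm N"
  obtains c where "c > 0" "\<And>x. c * norm x \<le> N x"
proof -
  have ne: "sphere (0::'a) 1 \<noteq> {}" by simp
  obtain z where z: "z \<in> sphere 0 1" "\<And>y. y \<in> sphere 0 1 \<Longrightarrow> N z \<le> N y"
    using continuous_attains_inf[OF compact_sphere ne is_norm_continuous_on[OF n]] by blast
  have "N z * norm x \<le> N x" for x
  proof (cases "x = 0")
    case False
    have "N z \<le> N ((1 / norm x) *\<^sub>R x)" using z(2) False by simp
    also have "\<dots> = N x / norm x" using is_normD(3)[OF n] by simp
    finally show ?thesis using False by (simp add: field_simps)
  qed (simp add: is_norm_zero[OF n])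
  moreover have "N z > 0" using z(1) by (intro is_norm_pos[OF n]) auto
  ultimately show ?thesis using that by blast
qed

lemma is_norm_equiv:
  fixes N1 N2 :: "'a::euclidean_space \<Rightarrow> real"
  assumes "is_norm N1" "is_norm N2"
  obtains C where "C > 0" "\<And>x. N2 x \<le> C * N1 x"
proof -
  obtain C where C: "C > 0" "\<And>x. N2 x \<le> C * norm x" using is_norm_upper_bound[OF assms(2)] by blast
  obtain c where c: "c > 0" "\<And>x. c * norm x \<le> N1 x" using is_norm_lower_bound[OF assms(1)] by blast
  have "N2 x \<le> C / c * N1 x" for x
  proof -
    have "C * norm x \<le> C * (N1 x / c)" using c C(1) by (intro mult_left_mono) (auto simp: field_simps)
    then show ?thesis using C(2)[of x] by simp
  qed
  then show thesis using that[of "C / c"] C c by simp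
qed

lemma ex_nonzero_euclidean: "\<exists>x::'a::euclidean_space. x \<noteq> 0"
  using nonzero_Basis SOME_Basis by blast

lemma is_norm_unit_sphere_nonempty:
  fixes M :: "'a::euclidean_space \<Rightarrow> real"
  assumes "is_norm M" shows "{w. M w = 1} \<noteq> {}"
proof -
  obtain x :: 'a where "x \<noteq> 0" using ex_nonzero_euclidean by blast
  then have "M ((1 / M x) *\<^sub>R x) = 1" using is_normD(3)[OF assms] is_norm_pos[OF assms, of x] by simp
  then show ?thesis by blast
qed

lemma linear_is_norm_bound:
  fixes F :: "'a::euclidean_space \<Rightarrow> 'b::euclidean_space"
  assumes M: "is_norm M" and N: "is_norm N" and F: "linear F"
  obtains D where "D > 0" "\<And>w. N (F w) \<le> D * M w"
proof -
  obtain B where B: "B > 0" "\<And>x. norm (F x) \<le> norm x * B"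
    using bounded_linear.pos_bounded F linear_conv_bounded_linear by blast
  obtain C where C: "C > 0" "\<And>x. N x \<le> C * norm x" using is_norm_upper_bound[OF N] by blast
  obtain c where c: "c > 0" "\<And>x. c * norm x \<le> M x" using is_norm_lower_bound[OF M] by blast
  have "N (F w) \<le> C * B / c * M w" for w
  proof -
    have "N (F w) \<le> C * norm (F w)" by (rule C(2))
    also have "\<dots> \<le> C * (B * norm w)" using B(2)[of w] C(1) by (simp add: mult.commute)
    also have "\<dots> \<le> C * (B * (M w / c))"
      using c(2)[of w] c(1) B(1) C(1) by (intro mult_left_mono) (auto simp: field_simps)
    finally show ?thesis by (simp add: field_simps)
  qed
  then show thesis using that[of "C * B / c"] B C c by simp
qed

lemma opnorm_bound:
  fixes F :: "'a::euclidean_space \<Rightarrow> 'b::euclidean_space"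
  assumes M: "is_norm M" and N: "is_norm N" and F: "linear F"
  shows "N (F w) \<le> opnorm M N F * M w"
proof (cases "w = 0")
  case True then show ?thesis using linear_0[OF F] by (simp add: is_norm_zero[OF N] is_norm_zero[OF M])
next
  case False
  then have Mw: "M w > 0" using is_norm_pos[OF M] by blast
  obtain D where "D > 0" "\<And>w. N (F w) \<le> D * M w" using linear_is_norm_bound[OF M N F] by blast
  then have bdd: "bdd_above ((\<lambda>w. N (F w)) ` {w. M w = 1})"
    by (intro bdd_aboveI[of _ D]) (auto, metis mult.right_neutral)
  define w' where "w' = (1 / M w) *\<^sub>R w"
  have "M w' = 1" unfolding w'_def using is_normD(3)[OF M] Mw by simp
  then have "N (F w') \<le> opnorm M N F" unfolding opnorm_def by (intro cSUP_upper bdd) auto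
  moreover have "N (F w') = N (F w) / M w" unfolding w'_def
    using linear_scale[OF F] is_normD(3)[OF N] Mw by simp
  ultimately show ?thesis using Mw by (simp add: field_simps)
qed

lemma opnorm_nonneg:
  fixes F :: "'a::euclidean_space \<Rightarrow> 'b::euclidean_space"
  assumes M: "is_norm M" and N: "is_norm N" and F: "linear F"
  shows "opnorm M N F \<ge> 0"
proof -
  obtain w where "M w = 1" using is_norm_unit_sphere_nonempty[OF M] by blast
  then show ?thesis using opnorm_bound[OF M N F, of w] is_normD(1)[OF N, of "F w"] by simp
qed

lemma opnorm_le:
  fixes F :: "'a::euclidean_space \<Rightarrow> 'b::euclidean_space"
  assumes M: "is_norm M" and "\<And>w. N (F w) \<le> c * M w"
  shows "opnorm M N F \<le> c"
  unfolding opnorm_def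
  using assms(2) is_norm_unit_sphere_nonempty[OF M] by (intro cSUP_least) (auto, metis mult.right_neutral)

lemma opnorm_pos:
  fixes F :: "'a::euclidean_space \<Rightarrow> 'b::euclidean_space"
  assumes M: "is_norm M" and N: "is_norm N" and F: "linear F" and "F w \<noteq> 0"
  shows "opnorm M N F > 0"
proof -
  have "0 < N (F w)" using is_norm_pos[OF N] assms(4) by blast
  also have "\<dots> \<le> opnorm M N F * M w" by (rule opnorm_bound[OF M N F])
  finally show ?thesis using opnorm_nonneg[OF M N F] is_normD(1)[OF M, of w]
    by (simp add: zero_less_mult_iff)
qed

lemma opnorm_minus_commute:
  "is_norm N \<Longrightarrow> opnorm M N (\<lambda>w. A w - B w) = opnorm M N (\<lambda>w. B w - A w)"
  unfolding opnorm_def using is_norm_minus_commute by metis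

lemma opnorm_diff_self:
  fixes B :: "'a::euclidean_space \<Rightarrow> 'b::euclidean_space"
  assumes M: "is_norm M" and N: "is_norm N"
  shows "opnorm M N (\<lambda>w. B w - B w) = 0"
  unfolding opnorm_def using is_norm_zero[OF N] is_norm_unit_sphere_nonempty[OF M] by simp

lemma opnorm_triangle:
  fixes A B C :: "'a::euclidean_space \<Rightarrow> 'b::euclidean_space"
  assumes M: "is_norm M" and N: "is_norm N" and "linear A" "linear B" "linear C"
  shows "opnorm M N (\<lambda>w. A w - C w) \<le> opnorm M N (\<lambda>w. A w - B w) + opnorm M N (\<lambda>w. B w - C w)"
proof (rule opnorm_le[OF M])
  fix w
  have "N (A w - C w) \<le> N (A w - B w) + N (B w - C w)"
    using is_normD(4)[OF N, of "A w - B w" "B w - C w"] by simp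
  also have "\<dots> \<le> opnorm M N (\<lambda>w. A w - B w) * M w + opnorm M N (\<lambda>w. B w - C w) * M w"
    using assms by (intro add_mono opnorm_bound linear_compose_sub)
  finally show "N (A w - C w) \<le> (opnorm M N (\<lambda>w. A w - B w) + opnorm M N (\<lambda>w. B w - C w)) * M w"
    by (simp add: algebra_simps)
qed

lemma inv_opnorm_bound:
  fixes A :: "'a::euclidean_space \<Rightarrow> 'b::euclidean_space"
  assumes M: "is_norm M" and N: "is_norm N" and A: "linear A" "inj A"
  shows "M w \<le> inv_opnorm M N A * N (A w)"
proof -
  obtain b where b: "b > 0" "\<And>x. b * norm x \<le> norm (A x)" using linear_inj_bounded_below_pos[OF A] by blast
  obtain C where C: "C > 0" "\<And>x. M x \<le> C * norm x" using is_norm_upper_bound[OF M] by blast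
  obtain c where c: "c > 0" "\<And>x. c * norm x \<le> N x" using is_norm_lower_bound[OF N] by blast
  have "M (inv A (A x)) \<le> C / (b * c) * N (A x)" for x
  proof -
    have "M (inv A (A x)) \<le> C * norm x" using A(2) C(2) by simp
    also have "\<dots> \<le> C * (norm (A x) / b)" using b C(1) by (intro mult_left_mono) (auto simp: field_simps)
    also have "\<dots> \<le> C * (N (A x) / (b * c))" using c(2)[of "A x"] c(1) b(1) C(1)
      by (intro mult_left_mono) (auto simp: field_simps)
    finally show ?thesis by (simp add: field_simps)
  qed
  then have bdd: "bdd_above ((\<lambda>x. M (inv A x)) ` {x \<in> range A. N x = 1})"
    by (intro bdd_aboveI[of _ "C / (b * c)"]) (auto, metis mult.right_neutral)
  show ?thesis
  proof (cases "w = 0")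
    case True then show ?thesis using linear_0[OF A(1)] by (simp add: is_norm_zero[OF N] is_norm_zero[OF M])
  next
    case False
    then have NA: "N (A w) > 0" using is_norm_pos[OF N] A linear_injective_0 by blast
    define x where "x = A ((1 / N (A w)) *\<^sub>R w)"
    have "N x = 1" unfolding x_def using linear_scale[OF A(1)] is_normD(3)[OF N] NA by simp
    then have "M (inv A x) \<le> inv_opnorm M N A" unfolding inv_opnorm_def x_def
      by (intro cSUP_upper bdd) auto
    moreover have "M (inv A x) = M w / N (A w)" unfolding x_def using A(2) is_normD(3)[OF M] NA by simp
    ultimately show ?thesis using NA by (simp add: field_simps)
  qed
qed

lemma inv_opnorm_pos:
  fixes A :: "'a::euclidean_space \<Rightarrow> 'b::euclidean_space"
  assumes M: "is_norm M" and N: "is_norm N" and A: "linear A" "inj A"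
  shows "inv_opnorm M N A > 0"
proof -
  obtain w :: 'a where w: "w \<noteq> 0" using ex_nonzero_euclidean by blast
  have "0 < M w" using is_norm_pos[OF M w] .
  also have "\<dots> \<le> inv_opnorm M N A * N (A w)" by (rule inv_opnorm_bound[OF assms])
  finally show ?thesis using is_normD(1)[OF N, of "A w"] by (simp add: zero_less_mult_iff)
qed

section \<open>Regular cones\<close>

lemma subspace_inner_eq_0_if_bdd_above:
  assumes R: "subspace R" and bdd: "\<And>x. x \<in> R \<Longrightarrow> a \<bullet> x \<le> c" and r: "r \<in> R"
  shows "a \<bullet> r = 0"
proof (rule ccontr)
  assume ne: "a \<bullet> r \<noteq> 0"
  have "((\<bar>c\<bar> + 1) / (a \<bullet> r)) *\<^sub>R r \<in> R" using R r subspace_scale by blast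
  then have "\<bar>c\<bar> + 1 \<le> c" using bdd ne by fastforce
  then show False by linarith
qed

locale reg_cone =
  fixes K :: "'v::euclidean_space set"
  assumes regular: "regular_cone K"
begin

lemma K_closed: "closed K" and K_convex: "convex K" and K_cone: "cone K"
  and K_pointed: "K \<inter> uminus ` K \<subseteq> {0}" and K_interior: "interior K \<noteq> {}"
  using regular unfolding regular_cone_def by auto

lemma K_scaleR: "k \<in> K \<Longrightarrow> c \<ge> 0 \<Longrightarrow> c *\<^sub>R k \<in> K"
  using K_cone unfolding cone_def by blast

lemma K_add: "x \<in> K \<Longrightarrow> y \<in> K \<Longrightarrow> x + y \<in> K"
  using convex_cone K_convex K_cone by blast

lemma zero_in_K: "0 \<in> K"
proof -
  obtain x where "x \<in> K" using K_interior interior_subset by blast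
  then show ?thesis using K_scaleR[of x 0] by simp
qed

lemma K_antisym: "x \<in> K \<Longrightarrow> - x \<in> K \<Longrightarrow> x = 0"
  using K_pointed by (metis IntI image_eqI minus_minus singletonD subsetD)

lemma K_sum: "finite S \<Longrightarrow> (\<And>i. i \<in> S \<Longrightarrow> f i \<in> K) \<Longrightarrow> sum f S \<in> K"
  by (induction S rule: finite_induct) (auto simp: zero_in_K K_add)

lemma zero_notin_interior_K: "0 \<notin> interior K"
proof
  assume "0 \<in> interior K"
  then obtain r where r: "r > 0" "ball 0 r \<subseteq> K" using mem_interior by blast
  obtain e :: 'v where e: "e \<noteq> 0" using ex_nonzero_euclidean by blast
  define q where "q = (r / 2 / norm e) *\<^sub>R e"
  have "q \<in> ball 0 r" "-q \<in> ball 0 r" unfolding q_def using r e by auto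
  then have "q = 0" using K_antisym r by blast
  then show False unfolding q_def using r e by simp
qed

lemma ex_nonzero_in_K: obtains k where "k \<in> K" "k \<noteq> 0"
  using K_interior zero_notin_interior_K interior_subset by blast

lemma normalize_in_K_sphere: "k \<in> K \<Longrightarrow> k \<noteq> 0 \<Longrightarrow> (1 / norm k) *\<^sub>R k \<in> K \<inter> sphere 0 1"
  using K_scaleR[of k "1 / norm k"] by simp

lemma dual_cone_pos_on_interior:
  assumes u: "u \<in> dual_cone K" "u \<noteq> 0" and p: "p \<in> interior K"
  shows "u \<bullet> p > 0"
proof -
  obtain r where r: "r > 0" "ball p r \<subseteq> K" using p mem_interior by blast
  define q where "q = p - (r / 2 / norm u) *\<^sub>R u"
  have "q \<in> ball p r" unfolding q_def using r u by (simp add: dist_norm)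
  then have "u \<bullet> q \<ge> 0" using u r unfolding dual_cone_def by (auto simp: inner_commute)
  moreover have "u \<bullet> q = u \<bullet> p - (r / 2 / norm u) * (u \<bullet> u)" unfolding q_def by (simp add: inner_diff_right)
  moreover have "(r / 2 / norm u) * (u \<bullet> u) > 0" using r u by simp
  ultimately show ?thesis by linarith
qed

lemma add_interior_K:
  assumes k: "k \<in> K" and p: "p \<in> interior K" and c: "c > 0"
  shows "k + c *\<^sub>R p \<in> interior K"
proof -
  obtain r where r: "r > 0" "ball p r \<subseteq> K" using p mem_interior by blast
  have "ball (k + c *\<^sub>R p) (c * r) \<subseteq> K"
  proof
    fix y assume y: "y \<in> ball (k + c *\<^sub>R p) (c * r)"
    define z where "z = (1 / c) *\<^sub>R (y - k)"
    have "dist p z < r"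
    proof -
      have "p - z = (1/c) *\<^sub>R (k + c *\<^sub>R p - y)" unfolding z_def using c by (simp add: algebra_simps)
      then have "norm (p - z) = (1/c) * norm (k + c *\<^sub>R p - y)" using c by simp
      also have "\<dots> < (1/c) * (c * r)" using y c by (intro mult_strict_left_mono) (auto simp: dist_norm)
      finally show ?thesis using c by (simp add: dist_norm)
    qed
    then have "z \<in> K" using r by auto
    then have "c *\<^sub>R z \<in> K" using K_scaleR c by simp
    moreover have "y = k + c *\<^sub>R z" unfolding z_def using c by simp
    ultimately show "y \<in> K" using K_add k by simp
  qed
  then show ?thesis using r c by (meson interior_maximal open_ball centre_in_ball mult_pos_pos subsetD)
qed

lemma interior_dual_cone_pos:
  assumes u: "u \<in> interior (dual_cone K)" and k: "k \<in> K" "k \<noteq> 0"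
  shows "u \<bullet> k > 0"
proof -
  obtain r where r: "r > 0" "ball u r \<subseteq> dual_cone K" using u mem_interior by blast
  define q where "q = u - (r / 2 / norm k) *\<^sub>R k"
  have "q \<in> ball u r" unfolding q_def using r k by (simp add: dist_norm)
  then have "q \<bullet> k \<ge> 0" using r k unfolding dual_cone_def by auto
  moreover have "q \<bullet> k = u \<bullet> k - (r / 2 / norm k) * (k \<bullet> k)" unfolding q_def by (simp add: inner_diff_left)
  moreover have "(r / 2 / norm k) * (k \<bullet> k) > 0" using r k by simp
  ultimately show ?thesis by linarith
qed

lemma zero_notin_convex_hull_K_sphere: "0 \<notin> convex hull (K \<inter> sphere 0 1)"
proof
  assume "0 \<in> convex hull (K \<inter> sphere 0 1)"
  then obtain S u where S: "finite S" "S \<subseteq> K \<inter> sphere 0 1" "\<forall>x\<in>S. 0 \<le> u x" "sum u S = 1"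
     "(\<Sum>v\<in>S. u v *\<^sub>R v) = 0"
    unfolding convex_hull_explicit by blast
  obtain s where s: "s \<in> S" "u s > 0"
  proof (rule ccontr)
    assume "\<not> thesis"
    then have "\<forall>x\<in>S. u x = 0" using that S(3) by force
    then have "sum u S = 0" by simp
    then show False using S(4) by simp
  qed
  have "(\<Sum>v\<in>S. u v *\<^sub>R v) = u s *\<^sub>R s + (\<Sum>v\<in>S - {s}. u v *\<^sub>R v)"
    using S(1) s(1) by (simp add: sum.remove)
  then have eq: "u s *\<^sub>R s = - (\<Sum>v\<in>S - {s}. u v *\<^sub>R v)" using S(5) by (simp add: eq_neg_iff_add_eq_0)
  have "(\<Sum>v\<in>S - {s}. u v *\<^sub>R v) \<in> K" using S by (intro K_sum K_scaleR) auto
  moreover have "u s *\<^sub>R s \<in> K" using S s by (intro K_scaleR) auto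
  ultimately have "u s *\<^sub>R s = 0" using eq K_antisym by (metis minus_minus)
  then show False using s S(2) by auto
qed

lemma gordan_alternative:
  assumes R: "subspace R" "R \<inter> K \<subseteq> {0}"
  obtains u b where "b > 0" "\<And>r. r \<in> R \<Longrightarrow> u \<bullet> r = 0" "\<And>k. k \<in> K \<Longrightarrow> u \<bullet> k \<ge> b * norm k"
proof -
  define H where "H = convex hull (K \<inter> sphere 0 1)"
  define S where "S = (\<Union>x\<in>R. \<Union>y\<in>H. {x + y})"
  have "convex S" unfolding S_def H_def
    using convex_sums[OF subspace_imp_convex[OF R(1)] convex_convex_hull] by blast
  moreover have "closed S"
  proof -
    have "compact (K \<inter> sphere 0 1)" using closed_Int_compact[OF K_closed compact_sphere] by simp
    then have "compact H" unfolding H_def by (rule compact_convex_hull)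
    then show ?thesis unfolding S_def using closed_compact_sums[OF closed_subspace[OF R(1)]] by blast
  qed
  moreover have "0 \<notin> S"
  proof
    assume "0 \<in> S"
    then obtain x y where xy: "x \<in> R" "y \<in> H" "x + y = 0" unfolding S_def by auto
    then have "y = - x" by (simp add: eq_neg_iff_add_eq_0 add.commute)
    then have "y \<in> R" using xy R(1) subspace_neg by blast
    moreover have "y \<in> K" using xy hull_minimal[of "K \<inter> sphere 0 1" K convex] K_convex H_def by blast
    ultimately have "y = 0" using R(2) by blast
    then show False using xy zero_notin_convex_hull_K_sphere H_def by simp
  qed
  ultimately have "\<exists>a b. a \<noteq> 0 \<and> 0 < b \<and> (\<forall>x\<in>S. inner a x > b)"
    by (rule separating_hyperplane_closed_0)
  then obtain a b where ab: "a \<noteq> 0" "0 < b" "\<And>x. x \<in> S \<Longrightarrow> inner a x > b"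
    by blast
  obtain k0 where k0: "k0 \<in> K" "k0 \<noteq> 0" using ex_nonzero_in_K by blast
  define h0 where "h0 = (1 / norm k0) *\<^sub>R k0"
  have h0: "h0 \<in> H" unfolding H_def h0_def using normalize_in_K_sphere[OF k0] by (rule hull_inc)
  have "- a \<bullet> r \<le> a \<bullet> h0 - b" if "r \<in> R" for r
  proof -
    have "r + h0 \<in> S" unfolding S_def using that h0 by blast
    then have "b < a \<bullet> r + a \<bullet> h0" using ab(3) inner_add_right by metis
    then show ?thesis by simp
  qed
  then have orth: "a \<bullet> r = 0" if "r \<in> R" for r
    using subspace_inner_eq_0_if_bdd_above[OF R(1) _ that, of "- a" "a \<bullet> h0 - b"] by simp
  have pos: "a \<bullet> k \<ge> b * norm k" if k: "k \<in> K" for k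
  proof (cases "k = 0")
    case True then show ?thesis by simp
  next
    case False
    define h where "h = (1 / norm k) *\<^sub>R k"
    have "h \<in> H" unfolding H_def h_def using normalize_in_K_sphere[OF k False] by (rule hull_inc)
    then have "0 + h \<in> S" unfolding S_def using R(1) subspace_0 by blast
    then have "a \<bullet> h > b" using ab by simp
    then have "a \<bullet> k / norm k > b" unfolding h_def by simp
    then show ?thesis using False by (simp add: field_simps)
  qed
  show ?thesis using that[OF ab(2) orth pos] by blast
qed

lemma separate_subspace_from_interior:
  assumes R: "subspace R" "R \<inter> interior K = {}"
  obtains u where "u \<in> dual_cone K" "u \<noteq> 0" "\<And>r. r \<in> R \<Longrightarrow> u \<bullet> r = 0"
proof -
  have "R \<noteq> {}" using R(1) subspace_0 by blast
  then obtain a b where ab: "a \<noteq> 0" "\<And>x. x \<in> R \<Longrightarrow> inner a x \<le> b" "\<And>x. x \<in> interior K \<Longrightarrow> inner a x \<ge> b"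
    using separating_hyperplane_sets[of R "interior K"] R(2) subspace_imp_convex[OF R(1)] K_interior
      convex_interior[OF K_convex] by blast
  have orth: "a \<bullet> r = 0" if "r \<in> R" for r using subspace_inner_eq_0_if_bdd_above[OF R(1) ab(2) that] .
  have b0: "b \<ge> 0" using ab(2)[OF subspace_0[OF R(1)]] by simp
  have "interior K \<subseteq> {x. inner a x \<ge> 0}" using ab(3) b0 by force
  then have "closure (interior K) \<subseteq> {x. inner a x \<ge> 0}" by (intro closure_minimal closed_halfspace_ge)
  then have "K \<subseteq> {x. inner a x \<ge> 0}"
    using convex_closure_interior[OF K_convex K_interior] K_closed closure_closed by metis
  then have "a \<in> dual_cone K" unfolding dual_cone_def by (auto simp: inner_commute)
  then show ?thesis using that ab(1) orth by blast
qed

end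

section \<open>Robust feasibility and the ill-posed set\<close>

lemma adjoint_eq_0_iff:
  fixes B :: "'w::euclidean_space \<Rightarrow> 'v::euclidean_space"
  assumes "linear B"
  shows "adjoint B u = 0 \<longleftrightarrow> (\<forall>w. u \<bullet> B w = 0)"
proof
  assume "\<forall>w. u \<bullet> B w = 0"
  then have "adjoint B u \<bullet> adjoint B u = 0" using adjoint_works[OF assms] by (simp add: inner_commute)
  then show "adjoint B u = 0" by simp
qed (use adjoint_works[OF assms] in \<open>metis inner_commute inner_zero_right\<close>)

lemma linear_add_rank_one:
  fixes g :: "'a::real_vector \<Rightarrow> real"
  shows "linear B \<Longrightarrow> linear g \<Longrightarrow> linear (\<lambda>w. B w + (t * g w) *\<^sub>R p)"
  by (intro linearI) (simp_all add: linear_add linear_scale algebra_simps)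

lemma connected_unit_interval_dichotomy:
  fixes P Q :: "real \<Rightarrow> bool"
  assumes "open {t. P t}" "open {t. Q t}" "\<And>t. \<not> (P t \<and> Q t)" "\<And>t. t \<in> {0..1} \<Longrightarrow> P t \<or> Q t"
  shows "P 0 = P 1 \<and> Q 0 = Q 1"
proof -
  have "{t. P t} \<inter> {0..1} = {} \<or> {t. Q t} \<inter> {0..1} = {}"
  proof (rule connectedD[OF connected_Icc assms(1,2)])
    show "{t. P t} \<inter> {t. Q t} \<inter> {0..1} = {}" using assms(3) by blast
    show "{0..1} \<subseteq> {t. P t} \<union> {t. Q t}" using assms(4) by blast
  qed
  then show ?thesis using assms(3,4)[of 0] assms(3,4)[of 1] by auto
qed

locale conic_system = reg_cone K
  for K :: "'v::euclidean_space set" +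
  fixes nW :: "'w::euclidean_space \<Rightarrow> real" and n2 :: "'v \<Rightarrow> real"
  assumes nW: "is_norm nW" and n2: "is_norm n2"
begin

definition robustly :: "(('w \<Rightarrow> 'v) \<Rightarrow> bool) \<Rightarrow> ('w \<Rightarrow> 'v) \<Rightarrow> bool" where
  "robustly P B \<longleftrightarrow> (\<exists>\<epsilon>>0. \<forall>A'. linear A' \<and> opnorm nW n2 (\<lambda>w. A' w - B w) < \<epsilon> \<longrightarrow> P A')"

abbreviation "robust_primal \<equiv> robustly (primal_feasible K)"
abbreviation "robust_dual \<equiv> robustly (dual_feasible K)"

lemma ill_posed_set_iff:
  "B \<in> ill_posed_set nW n2 K \<longleftrightarrow> linear B \<and> \<not> robust_primal B \<and> \<not> robust_dual B"
  unfolding ill_posed_set_def well_posed_def robustly_def by blast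

lemma robustly_imp: "robustly P B \<Longrightarrow> linear B \<Longrightarrow> P B"
  unfolding robustly_def using opnorm_diff_self[OF nW n2, of B] by force

lemma robustly_open:
  assumes "robustly P B" "linear B"
  obtains d where "d > 0" "\<And>B'. linear B' \<Longrightarrow> opnorm nW n2 (\<lambda>w. B' w - B w) < d \<Longrightarrow> robustly P B'"
proof -
  obtain e where e: "e > 0" "\<And>A'. linear A' \<Longrightarrow> opnorm nW n2 (\<lambda>w. A' w - B w) < e \<Longrightarrow> P A'"
    using assms(1) unfolding robustly_def by blast
  have "robustly P B'" if B': "linear B'" "opnorm nW n2 (\<lambda>w. B' w - B w) < e / 2" for B'
    unfolding robustly_def
  proof (intro exI[of _ "e / 2"] conjI allI impI)
    fix A' assume A': "linear A' \<and> opnorm nW n2 (\<lambda>w. A' w - B' w) < e / 2"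
    have "opnorm nW n2 (\<lambda>w. A' w - B w) \<le> opnorm nW n2 (\<lambda>w. A' w - B' w) + opnorm nW n2 (\<lambda>w. B' w - B w)"
      using opnorm_triangle[OF nW n2] A' B' assms(2) by blast
    then show "P A'" using e(2) A' B' by simp
  qed (use e in simp)
  then show thesis using that[of "e / 2"] e(1) by simp
qed

lemma robustly_rank_one:
  fixes g :: "'w \<Rightarrow> real"
  assumes "robustly P B" "linear B" "linear g"
  obtains t0 where "t0 > 0" "\<And>t. \<bar>t\<bar> < t0 \<Longrightarrow> P (\<lambda>w. B w + (t * g w) *\<^sub>R p)"
proof -
  obtain e where e: "e > 0" "\<And>A'. linear A' \<Longrightarrow> opnorm nW n2 (\<lambda>w. A' w - B w) < e \<Longrightarrow> P A'"
    using assms(1) unfolding robustly_def by blast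
  obtain D where D: "D > 0" "\<And>w. \<bar>g w\<bar> \<le> D * nW w"
    using linear_is_norm_bound[OF nW is_norm_norm assms(3)] by auto
  define t0 where "t0 = e / (D * n2 p + 1)"
  have Dp: "D * n2 p \<ge> 0" using D(1) is_normD(1)[OF n2] by simp
  have "P (\<lambda>w. B w + (t * g w) *\<^sub>R p)" if t: "\<bar>t\<bar> < t0" for t
  proof (rule e(2))
    show "linear (\<lambda>w. B w + (t * g w) *\<^sub>R p)" using linear_add_rank_one assms(2,3) .
    have "opnorm nW n2 (\<lambda>w. B w + (t * g w) *\<^sub>R p - B w) \<le> \<bar>t\<bar> * (D * n2 p)"
    proof (rule opnorm_le[OF nW])
      fix w
      have "n2 (B w + (t * g w) *\<^sub>R p - B w) = \<bar>t\<bar> * \<bar>g w\<bar> * n2 p"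
        using is_normD(3)[OF n2] by (simp add: abs_mult)
      also have "\<dots> \<le> \<bar>t\<bar> * (D * nW w) * n2 p"
        using D(2) is_normD(1)[OF n2] by (intro mult_right_mono mult_left_mono) auto
      finally show "n2 (B w + (t * g w) *\<^sub>R p - B w) \<le> \<bar>t\<bar> * (D * n2 p) * nW w" by (simp add: ac_simps)
    qed
    also have "\<dots> \<le> t0 * (D * n2 p)" using t Dp by (intro mult_right_mono) auto
    also have "\<dots> < e" unfolding t0_def using e(1) Dp by (simp add: field_simps)
    finally show "opnorm nW n2 (\<lambda>w. B w + (t * g w) *\<^sub>R p - B w) < e" .
  qed
  moreover have "t0 > 0" unfolding t0_def using e(1) Dp by simp
  ultimately show thesis using that by blast
qed

lemma primal_or_dual_feasible:
  assumes B: "linear B"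
  shows "primal_feasible K B \<or> dual_feasible K B"
proof (rule ccontr)
  assume h: "\<not> (primal_feasible K B \<or> dual_feasible K B)"
  then have "range B \<inter> K \<subseteq> {0}" unfolding primal_feasible_def by auto
  then obtain b u where ub: "b > 0" "\<And>r. r \<in> range B \<Longrightarrow> u \<bullet> r = 0" "\<And>k. k \<in> K \<Longrightarrow> u \<bullet> k \<ge> b * norm k"
    by (rule gordan_alternative[OF linear_subspace_image[OF B subspace_UNIV]]) blast
  obtain k0 where k0: "k0 \<in> K" "k0 \<noteq> 0" using ex_nonzero_in_K by blast
  have "0 \<le> u \<bullet> k" if "k \<in> K" for k
    using order_trans[OF mult_nonneg_nonneg[OF less_imp_le[OF ub(1)] norm_ge_zero] ub(3)[OF that]] .
  then have "u \<in> dual_cone K" unfolding dual_cone_def by blast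
  moreover have "0 < b * norm k0" using ub(1) k0(2) by simp
  then have "u \<noteq> 0" using ub(3)[OF k0(1)] by auto
  moreover have "adjoint B u = 0" using adjoint_eq_0_iff[OF B] ub(2) by auto
  ultimately show False using h unfolding dual_feasible_def by blast
qed

lemma robust_primal_imp_not_dual_feasible:
  assumes B: "linear B" and P: "robust_primal B"
  shows "\<not> dual_feasible K B"
proof
  assume "dual_feasible K B"
  then obtain u where u: "u \<in> dual_cone K" "u \<noteq> 0" "\<And>w. u \<bullet> B w = 0"
    unfolding dual_feasible_def adjoint_eq_0_iff[OF B] by blast
  obtain \<beta> e where eb: "\<beta> > 0" "\<And>k. k \<in> K \<Longrightarrow> e \<bullet> k \<ge> \<beta> * norm k"
    by (rule gordan_alternative[of "{0}"]) (auto simp: subspace_0 subspace_def)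
  obtain p where p: "p \<in> interior K" using K_interior by blast
  have up: "u \<bullet> p > 0" using dual_cone_pos_on_interior[OF u(1,2) p] .
  have "p \<in> K" using p interior_subset by blast
  then have ep: "e \<bullet> p \<ge> 0"
    using order_trans[OF mult_nonneg_nonneg[OF less_imp_le[OF eb(1)] norm_ge_zero] eb(2)] by blast
  obtain t0 where t0: "t0 > 0" "\<And>t. \<bar>t\<bar> < t0 \<Longrightarrow> primal_feasible K (\<lambda>w. B w + (t * (e \<bullet> B w)) *\<^sub>R p)"
    by (rule robustly_rank_one[OF P B linear_compose[OF B bounded_linear_inner_right[of e, THEN bounded_linear.linear]],
          where p = p]) (simp add: o_def)
  define \<tau> where "\<tau> = min (t0 / 2) (1 / (2 * (e \<bullet> p + 1)))"
  have \<tau>: "\<tau> > 0" "\<tau> < t0" "\<tau> * (e \<bullet> p) < 1"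
    unfolding \<tau>_def using t0(1) ep by (auto simp: min_def field_simps)
  then obtain w where w: "B w - (\<tau> * (e \<bullet> B w)) *\<^sub>R p \<in> K" "B w - (\<tau> * (e \<bullet> B w)) *\<^sub>R p \<noteq> 0"
    using t0(2)[of "- \<tau>"] unfolding primal_feasible_def by auto
  define k where "k = B w - (\<tau> * (e \<bullet> B w)) *\<^sub>R p"
  define s where "s = \<tau> * (u \<bullet> p) / (1 - \<tau> * (e \<bullet> p))"
  have "s > 0" unfolding s_def using \<tau> up by simp
  have "(u + s *\<^sub>R e) \<bullet> k = s * (e \<bullet> B w) * (1 - \<tau> * (e \<bullet> p)) - \<tau> * (e \<bullet> B w) * (u \<bullet> p)"
    unfolding k_def using u(3)[of w] by (simp add: algebra_simps)
  also have "\<dots> = 0" unfolding s_def using \<tau>(3) by simp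
  finally have "(u + s *\<^sub>R e) \<bullet> k = 0" .
  moreover have "(u + s *\<^sub>R e) \<bullet> k > 0"
  proof -
    have "u \<bullet> k \<ge> 0" using u(1) w(1) unfolding dual_cone_def k_def by blast
    moreover have "0 < \<beta> * norm k" using eb(1) w(2) unfolding k_def by simp
    then have "0 < e \<bullet> k" using eb(2) w(1) unfolding k_def by (meson less_le_trans)
    then have "0 < s * (e \<bullet> k)" using \<open>s > 0\<close> by simp
    ultimately show ?thesis by (simp add: inner_add_left)
  qed
  ultimately show False by simp
qed

lemma not_robust_dual_if_cone_point:
  assumes B: "linear B" and w0: "w0 \<noteq> 0" "B w0 \<in> K"
  shows "\<not> robust_dual B"
proof
  assume "robust_dual B"
  obtain p where p: "p \<in> interior K" using K_interior by blast
  obtain t0 where t0: "t0 > 0" "\<And>t. \<bar>t\<bar> < t0 \<Longrightarrow> dual_feasible K (\<lambda>w. B w + (t * (w0 \<bullet> w)) *\<^sub>R p)"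
    by (rule robustly_rank_one[OF \<open>robust_dual B\<close> B bounded_linear_inner_right[of w0, THEN bounded_linear.linear],
          where p = p]) blast
  define B' where "B' = (\<lambda>w. B w + (t0 / 2 * (w0 \<bullet> w)) *\<^sub>R p)"
  have "linear B'" unfolding B'_def
    using linear_add_rank_one[OF B bounded_linear_inner_right[of w0, THEN bounded_linear.linear]] .
  have "dual_feasible K B'" unfolding B'_def using t0(1) by (intro t0(2)) simp
  then obtain u where u: "u \<in> dual_cone K" "u \<noteq> 0" "\<And>w. u \<bullet> B' w = 0"
    unfolding dual_feasible_def adjoint_eq_0_iff[OF \<open>linear B'\<close>] by blast
  have "B' w0 \<in> interior K"
    unfolding B'_def using add_interior_K[OF w0(2) p] t0(1) w0(1) by simp
  then show False using dual_cone_pos_on_interior[OF u(1,2)] u(3) by force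
qed

lemma robust_dual_imp_not_primal_feasible:
  assumes B: "linear B" and D: "robust_dual B"
  shows "\<not> primal_feasible K B"
  using not_robust_dual_if_cone_point[OF B _ _] D linear_0[OF B]
  unfolding primal_feasible_def by (metis DiffE singletonI)

lemma not_robust_primal_and_dual:
  assumes B: "linear B" and P: "robust_primal B"
  shows "\<not> robust_dual B"
  using robust_primal_imp_not_dual_feasible[OF B P] robustly_imp[OF _ B] by blast

lemma robust_primal_if_interior_point:
  assumes B: "linear B" and w0: "B w0 \<in> interior K"
  shows "robust_primal B"
proof -
  obtain r where r: "r > 0" "ball (B w0) r \<subseteq> interior K"
    using w0 open_interior open_contains_ball by blast
  obtain c where c: "c > 0" "\<And>x. c * norm x \<le> n2 x" using is_norm_lower_bound[OF n2] by blast
  have "w0 \<noteq> 0" using w0 zero_notin_interior_K linear_0[OF B] by auto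
  then have nw0: "nW w0 > 0" using is_norm_pos[OF nW] by blast
  have "primal_feasible K A'"
    if A': "linear A'" "opnorm nW n2 (\<lambda>w. A' w - B w) < r * c / nW w0" for A'
  proof -
    have "c * norm (A' w0 - B w0) \<le> opnorm nW n2 (\<lambda>w. A' w - B w) * nW w0"
      using c(2) opnorm_bound[OF nW n2 linear_compose_sub[OF A'(1) B]] order_trans by fastforce
    also have "\<dots> < r * c" using A'(2) nw0 by (simp add: field_simps)
    finally have "norm (A' w0 - B w0) < r" using c(1) by (simp add: mult.commute)
    then have "A' w0 \<in> interior K" using r(2) by (auto simp: dist_norm norm_minus_commute)
    then show ?thesis
      unfolding primal_feasible_def using zero_notin_interior_K interior_subset by fastforce
  qed
  then show ?thesis unfolding robustly_def using r(1) c(1) nw0 by (metis divide_pos_pos mult_pos_pos)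
qed

lemma not_primal_feasible_if_close:
  assumes A': "linear A'" and b: "b > 0" and \<beta>: "\<beta> > 0"
    and u: "\<And>w. u \<bullet> B w = 0" "\<And>k. k \<in> K \<Longrightarrow> b * norm k \<le> u \<bullet> k"
    and below: "\<And>w. \<beta> * norm w \<le> norm (B w)"
    and close: "\<And>w. (norm u + b) * norm (A' w - B w) \<le> b * \<beta> / 2 * norm w"
  shows "\<not> primal_feasible K A'"
proof
  assume "primal_feasible K A'"
  then obtain w where w: "A' w \<in> K" "A' w \<noteq> 0" unfolding primal_feasible_def by blast
  define d where "d = A' w - B w"
  have "b * norm (A' w) \<le> u \<bullet> d" using u(2)[OF w(1)] u(1)[of w] by (simp add: d_def inner_diff_right)
  also have "\<dots> \<le> norm u * norm d" by (rule norm_cauchy_schwarz)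
  finally have "b * norm (A' w) \<le> norm u * norm d" .
  moreover have "\<beta> * norm w \<le> norm (A' w) + norm d"
    using below[of w] norm_triangle_ineq4[of "A' w" d] by (simp add: d_def)
  then have "b * (\<beta> * norm w) \<le> b * norm (A' w) + b * norm d"
    using b by (metis distrib_left mult_left_mono less_imp_le)
  ultimately have "b * \<beta> * norm w \<le> b * \<beta> / 2 * norm w"
    using close[of w] unfolding d_def by (simp add: algebra_simps)
  then have "w = 0" using b \<beta> by (simp add: mult_le_cancel_left_pos)
  then show False using w(2) linear_0[OF A'] by simp
qed

lemma robust_dual_if_inj:
  assumes B: "linear B" "inj B" and trivial: "range B \<inter> K \<subseteq> {0}"
  shows "robust_dual B"
proof -
  obtain b u where ub: "b > 0" "\<And>r. r \<in> range B \<Longrightarrow> u \<bullet> r = 0" "\<And>k. k \<in> K \<Longrightarrow> u \<bullet> k \<ge> b * norm k"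
    using trivial by (rule gordan_alternative[OF linear_subspace_image[OF B(1) subspace_UNIV]]) blast
  obtain \<beta> where \<beta>: "\<beta> > 0" "\<And>x. \<beta> * norm x \<le> norm (B x)" using linear_inj_bounded_below_pos[OF B] by blast
  obtain c where c: "c > 0" "\<And>x. c * norm x \<le> n2 x" using is_norm_lower_bound[OF n2] by blast
  obtain C where C: "C > 0" "\<And>x. nW x \<le> C * norm x" using is_norm_upper_bound[OF nW] by blast
  define \<delta> where "\<delta> = b * \<beta> * c / (2 * C * (norm u + b))"
  have den: "2 * C * (norm u + b) > 0" using ub(1) C(1) by (simp add: add_nonneg_pos)
  then have "\<delta> > 0" unfolding \<delta>_def using ub(1) \<beta>(1) c(1) by simp
  have "dual_feasible K A'" if A': "linear A'" "opnorm nW n2 (\<lambda>w. A' w - B w) < \<delta>" for A'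
  proof -
    have "(norm u + b) * norm (A' w - B w) \<le> b * \<beta> / 2 * norm w" for w
    proof -
      have "c * norm (A' w - B w) \<le> opnorm nW n2 (\<lambda>w. A' w - B w) * nW w"
        using c(2) opnorm_bound[OF nW n2 linear_compose_sub[OF A'(1) B(1)]] order_trans by fastforce
      also have "\<dots> \<le> \<delta> * (C * norm w)"
        using A'(2) C(2)[of w] is_normD(1)[OF nW, of w] opnorm_nonneg[OF nW n2 linear_compose_sub[OF A'(1) B(1)]]
        by (intro mult_mono) auto
      finally have "c * norm (A' w - B w) * (norm u + b) \<le> \<delta> * (C * norm w) * (norm u + b)"
        using ub(1) by (simp add: mult_right_mono)
      also have "\<dots> = c * (b * \<beta> / 2 * norm w)"
        unfolding \<delta>_def using den by (simp add: field_simps)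
      finally show ?thesis using c(1) by (simp add: ac_simps)
    qed
    then have "\<not> primal_feasible K A'"
      using not_primal_feasible_if_close[OF A'(1) ub(1) \<beta>(1) _ ub(3) \<beta>(2)] ub(2) by blast
    then show ?thesis using primal_or_dual_feasible[OF A'(1)] by blast
  qed
  then show ?thesis unfolding robustly_def using \<open>\<delta> > 0\<close> by blast
qed

lemma zero_ill_posed: "(\<lambda>w. 0 :: 'v) \<in> ill_posed_set nW n2 K"
proof -
  obtain w0 :: 'w where "w0 \<noteq> 0" using ex_nonzero_euclidean by blast
  then have "\<not> robust_dual (\<lambda>w. 0 :: 'v)" using not_robust_dual_if_cone_point[OF linear_zero] zero_in_K by blast
  moreover have "\<not> robust_primal (\<lambda>w. 0 :: 'v)"
    using robustly_imp[OF _ linear_zero] unfolding primal_feasible_def by fastforce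
  ultimately show ?thesis unfolding ill_posed_set_iff using linear_zero by blast
qed

lemma ill_posed_on_segment:
  assumes A: "linear A0" "linear A1"
    and change: "robust_primal A0 \<noteq> robust_primal A1 \<or> robust_dual A0 \<noteq> robust_dual A1"
  obtains t where "t \<in> {0..1}" "(\<lambda>w. A0 w + t *\<^sub>R (A1 w - A0 w)) \<in> ill_posed_set nW n2 K"
proof -
  define S where "S t = (\<lambda>w. A0 w + t *\<^sub>R (A1 w - A0 w))" for t
  define \<Delta> where "\<Delta> = opnorm nW n2 (\<lambda>w. A1 w - A0 w)"
  have lin: "linear (S t)" for t
    unfolding S_def using A by (intro linearI) (simp_all add: linear_add linear_scale algebra_simps)
  have "\<Delta> \<ge> 0" unfolding \<Delta>_def using opnorm_nonneg[OF nW n2 linear_compose_sub[OF A(2,1)]] .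
  have close: "opnorm nW n2 (\<lambda>w. S s w - S t w) \<le> \<bar>s - t\<bar> * \<Delta>" for s t
  proof (rule opnorm_le[OF nW])
    fix w
    have "S s w - S t w = (s - t) *\<^sub>R (A1 w - A0 w)" unfolding S_def by (simp add: algebra_simps)
    then have "n2 (S s w - S t w) = \<bar>s - t\<bar> * n2 (A1 w - A0 w)" using is_normD(3)[OF n2] by simp
    also have "\<dots> \<le> \<bar>s - t\<bar> * (\<Delta> * nW w)"
      unfolding \<Delta>_def using opnorm_bound[OF nW n2 linear_compose_sub[OF A(2,1)]] by (intro mult_left_mono) auto
    finally show "n2 (S s w - S t w) \<le> \<bar>s - t\<bar> * \<Delta> * nW w" by (simp add: mult.assoc)
  qed
  have opn: "open {t. robustly P (S t)}" for P
    unfolding open_dist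
  proof (intro ballI)
    fix t assume "t \<in> {t. robustly P (S t)}"
    then obtain d where d: "d > 0" "\<And>B'. linear B' \<Longrightarrow> opnorm nW n2 (\<lambda>w. B' w - S t w) < d \<Longrightarrow> robustly P B'"
      using robustly_open lin by blast
    have "robustly P (S s)" if "dist s t < d / (\<Delta> + 1)" for s
    proof (rule d(2)[OF lin])
      have "\<bar>s - t\<bar> * (\<Delta> + 1) < d" using that \<open>\<Delta> \<ge> 0\<close> by (simp add: dist_real_def field_simps)
      moreover have "\<bar>s - t\<bar> * \<Delta> \<le> \<bar>s - t\<bar> * (\<Delta> + 1)" by (simp add: mult_left_mono)
      ultimately show "opnorm nW n2 (\<lambda>w. S s w - S t w) < d" using close[of s t] by linarith
    qed
    then show "\<exists>e>0. \<forall>s. dist s t < e \<longrightarrow> s \<in> {t. robustly P (S t)}"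
      using d(1) \<open>\<Delta> \<ge> 0\<close> by (intro exI[of _ "d / (\<Delta> + 1)"]) auto
  qed
  have "\<exists>t\<in>{0..1}. S t \<in> ill_posed_set nW n2 K"
  proof (rule ccontr)
    assume "\<not> ?thesis"
    then have "robust_primal (S t) \<or> robust_dual (S t)" if "t \<in> {0..1}" for t
      using that ill_posed_set_iff lin by blast
    then have "robust_primal (S 0) = robust_primal (S 1) \<and> robust_dual (S 0) = robust_dual (S 1)"
      using not_robust_primal_and_dual[OF lin] by (intro connected_unit_interval_dichotomy[OF opn opn]) blast+
    moreover have "S 0 = A0" "S 1 = A1" unfolding S_def by auto
    ultimately show False using change by simp
  qed
  then show thesis using that unfolding S_def by blast
qed

lemma Rdist_le:
  assumes A: "linear A" and B: "B \<in> ill_posed_set nW n2 K"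
  shows "Rdist nW n2 K A \<le> opnorm nW n2 (\<lambda>w. A w - B w)"
  unfolding Rdist_def
proof (rule cINF_lower[OF _ B])
  show "bdd_below ((\<lambda>A'. opnorm nW n2 (\<lambda>w. A w - A' w)) ` ill_posed_set nW n2 K)"
    using opnorm_nonneg[OF nW n2 linear_compose_sub[OF A]] unfolding ill_posed_set_def
    by (intro bdd_belowI[of _ 0]) auto
qed

lemma Rdist_le_of_status_change:
  assumes A: "linear A0" "linear A1"
    and change: "robust_primal A0 \<noteq> robust_primal A1 \<or> robust_dual A0 \<noteq> robust_dual A1"
  shows "Rdist nW n2 K A0 \<le> opnorm nW n2 (\<lambda>w. A1 w - A0 w)"
proof -
  obtain t where t: "t \<in> {0..1}" and ill: "(\<lambda>w. A0 w + t *\<^sub>R (A1 w - A0 w)) \<in> ill_posed_set nW n2 K"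
    using ill_posed_on_segment[OF A change] by blast
  have "Rdist nW n2 K A0 \<le> opnorm nW n2 (\<lambda>w. A0 w - (A0 w + t *\<^sub>R (A1 w - A0 w)))"
    by (rule Rdist_le[OF A(1) ill])
  also have "\<dots> = opnorm nW n2 (\<lambda>w. t *\<^sub>R (A1 w - A0 w))"
    using opnorm_minus_commute[OF n2, of nW "\<lambda>w. A0 w + t *\<^sub>R (A1 w - A0 w)" A0] by simp
  also have "\<dots> \<le> opnorm nW n2 (\<lambda>w. A1 w - A0 w)"
  proof (rule opnorm_le[OF nW])
    fix w
    have "n2 (t *\<^sub>R (A1 w - A0 w)) \<le> n2 (A1 w - A0 w)"
      using t is_normD(1)[OF n2] by (simp add: is_normD(3)[OF n2] mult_left_le_one_le)
    also have "\<dots> \<le> opnorm nW n2 (\<lambda>w. A1 w - A0 w) * nW w"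
      using opnorm_bound[OF nW n2 linear_compose_sub[OF A(2,1)]] .
    finally show "n2 (t *\<^sub>R (A1 w - A0 w)) \<le> opnorm nW n2 (\<lambda>w. A1 w - A0 w) * nW w" .
  qed
  finally show ?thesis .
qed

lemma Rdist_pos:
  assumes A: "linear A" and wp: "A \<notin> ill_posed_set nW n2 K"
  shows "Rdist nW n2 K A > 0"
proof -
  obtain P where P: "robustly P A" "\<And>B. B \<in> ill_posed_set nW n2 K \<Longrightarrow> \<not> robustly P B"
    using wp A ill_posed_set_iff by blast
  obtain d where d: "d > 0" "\<And>B'. linear B' \<Longrightarrow> opnorm nW n2 (\<lambda>w. B' w - A w) < d \<Longrightarrow> robustly P B'"
    using robustly_open[OF P(1) A] by blast
  have "d \<le> Rdist nW n2 K A" unfolding Rdist_def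
  proof (rule cINF_greatest)
    fix B assume B: "B \<in> ill_posed_set nW n2 K"
    then have "\<not> opnorm nW n2 (\<lambda>w. B w - A w) < d" using d(2) P(2) ill_posed_set_iff by blast
    then show "d \<le> opnorm nW n2 (\<lambda>w. A w - B w)" using opnorm_minus_commute[OF n2, of nW B A] by simp
  qed (use zero_ill_posed in blast)
  then show ?thesis using d(1) by simp
qed

end

section \<open>Subspaces in \<open>\<Sigma>\<^sub>m\<close>\<close>

lemma exists_subspace_between:
  fixes S T :: "'a::euclidean_space set"
  assumes "subspace S" "subspace T" "S \<subseteq> T" "dim S + n \<le> dim T"
  shows "\<exists>L. subspace L \<and> S \<subseteq> L \<and> L \<subseteq> T \<and> dim L = dim S + n"
  using assms
proof (induction n arbitrary: S)
  case 0 then show ?case by (intro exI[of _ S]) simp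
next
  case (Suc n)
  have "\<not> T \<subseteq> S"
  proof
    assume "T \<subseteq> S"
    then have "dim T \<le> dim S" by (rule dim_subset)
    then show False using Suc.prems(4) by simp
  qed
  then obtain t where t: "t \<in> T" "t \<notin> S" by blast
  define S' where "S' = span (insert t S)"
  have sS': "subspace S'" unfolding S'_def by simp
  have "S \<subseteq> S'" unfolding S'_def using span_superset by blast
  have "S' \<subseteq> T" unfolding S'_def using t Suc.prems(2,3) by (intro span_minimal) auto
  have "span S = S" using Suc.prems(1) by (rule span_eq_iff[THEN iffD2])
  then have "t \<notin> span S" using t(2) by metis
  then have dS': "dim S' = dim S + 1" unfolding S'_def by (simp add: dim_insert)
  have "dim S' + n \<le> dim T" using Suc.prems(4) dS' by simp
  then have "\<exists>L. subspace L \<and> S' \<subseteq> L \<and> L \<subseteq> T \<and> dim L = dim S' + n"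
    by (rule Suc.IH[OF sS' Suc.prems(2) \<open>S' \<subseteq> T\<close>])
  then obtain L where L: "subspace L" "S' \<subseteq> L" "L \<subseteq> T" "dim L = dim S' + n" by blast
  have "S \<subseteq> L" using \<open>S \<subseteq> S'\<close> L(2) by (rule subset_trans)
  moreover have "dim L = dim S + Suc n" using L(4) dS' by simp
  ultimately show ?case using L(1,3) by blast
qed

lemma dim_orthogonal_comp:
  fixes R :: "'a::euclidean_space set"
  assumes "subspace R"
  shows "dim (orthogonal_comp R) + dim R = DIM('a)"
proof -
  have "dim {y \<in> UNIV. \<forall>x \<in> R. orthogonal x y} + dim R = dim (UNIV :: 'a set)"
    by (rule dim_subspace_orthogonal_to_vectors) (use assms in auto)
  moreover have "{y \<in> UNIV. \<forall>x \<in> R. orthogonal x y} = orthogonal_comp R"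
    by (auto simp: orthogonal_comp_def orthogonal_def inner_commute)
  ultimately show ?thesis by simp
qed

lemma dim_range_lt_if_not_inj:
  fixes B :: "'w::euclidean_space \<Rightarrow> 'v::euclidean_space"
  assumes B: "linear B" and ni: "\<not> inj B"
  shows "dim (range B) < DIM('w)"
proof -
  obtain z where z: "B z = 0" "z \<noteq> 0" using ni linear_injective_0[OF B] by blast
  define H where "H = {x. z \<bullet> x = 0}"
  have "range B \<subseteq> B ` H"
  proof
    fix y assume "y \<in> range B"
    then obtain x where x: "y = B x" by blast
    define c where "c = (x \<bullet> z) / (z \<bullet> z)"
    have "z \<bullet> (x - c *\<^sub>R z) = 0" unfolding c_def using z(2) by (simp add: inner_diff_right inner_commute)
    moreover have "B (x - c *\<^sub>R z) = y" using x z(1) linear_diff[OF B] linear_scale[OF B] by simp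
    ultimately show "y \<in> B ` H" unfolding H_def by (metis (mono_tags) image_eqI mem_Collect_eq)
  qed
  then have "dim (range B) \<le> dim (B ` H)" by (rule dim_subset)
  also have "\<dots> \<le> dim H" by (rule dim_image_le[OF B])
  finally show ?thesis using dim_hyperplane[OF z(2)] DIM_positive[where 'a='w] unfolding H_def by linarith
qed

context reg_cone
begin

lemma Sigma_m_superspace:
  assumes R: "subspace R" and u: "u \<in> dual_cone K" "u \<noteq> 0" and k: "k \<in> K" "k \<noteq> 0"
    and uk: "u \<bullet> k = 0" and uR: "\<And>r. r \<in> R \<Longrightarrow> u \<bullet> r = 0"
    and dm: "dim (insert k R) \<le> m" and mV: "m < DIM('v)"
  obtains L' where "L' \<in> Sigma_m K m" "R \<subseteq> L'"
proof -
  define S where "S = span (insert k R)"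
  define T where "T = {x. u \<bullet> x = 0}"
  have sT: "subspace T" unfolding T_def by (rule subspace_hyperplane)
  have sS: "subspace S" unfolding S_def by (rule subspace_span)
  have ST: "S \<subseteq> T" unfolding S_def T_def using uk uR subspace_hyperplane
    by (intro span_minimal) auto
  have dS: "dim S \<le> m" unfolding S_def using dm by simp
  have dT: "m \<le> dim T" using dim_hyperplane[OF u(2)] mV unfolding T_def by simp
  have "\<exists>L. subspace L \<and> S \<subseteq> L \<and> L \<subseteq> T \<and> dim L = dim S + (m - dim S)"
    using dS dT by (intro exists_subspace_between[OF sS sT ST]) simp
  then obtain L where L: "subspace L" "S \<subseteq> L" "L \<subseteq> T" "dim L = m" using dS by auto
  have kL: "k \<in> L" using L(2) span_superset unfolding S_def by blast
  have RL: "R \<subseteq> L" using L(2) span_superset unfolding S_def by blast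
  have "u \<in> orthogonal_comp L" using L(3) unfolding T_def orthogonal_comp_def orthogonal_def
    by (auto simp: inner_commute)
  then have "orthogonal_comp L \<inter> dual_cone K \<noteq> {0}" using u by blast
  moreover have "L \<inter> K \<noteq> {0}" using kL k by blast
  ultimately have "L \<in> Sigma_m K m" unfolding Sigma_m_def Gr_def using L by simp
  then show ?thesis using that RL by blast
qed

text \<open>Tilting \<open>z\<close> towards \<open>-u0\<close> until it first touches \<open>K\<close> yields a supporting functional of
  \<open>K\<close>; the touching point \<open>ks\<close> minimises \<open>z \<bullet> k / u0 \<bullet> k\<close> over the compact slice \<open>K \<inter> sphere 0 1\<close>.\<close>

lemma tilt_into_dual_cone:
  assumes b: "b > 0" and u0: "\<And>k. k \<in> K \<Longrightarrow> b * norm k \<le> u0 \<bullet> k"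
  obtains lam ks where "z - lam *\<^sub>R u0 \<in> dual_cone K" "ks \<in> K" "ks \<noteq> 0" "(z - lam *\<^sub>R u0) \<bullet> ks = 0"
proof -
  define C where "C = K \<inter> sphere 0 1"
  have "compact C" unfolding C_def using closed_Int_compact[OF K_closed compact_sphere] .
  moreover obtain k0 where "k0 \<in> K" "k0 \<noteq> 0" using ex_nonzero_in_K by blast
  then have "C \<noteq> {}" unfolding C_def using normalize_in_K_sphere by blast
  moreover have pos: "b \<le> u0 \<bullet> k" if "k \<in> C" for k using u0[of k] that unfolding C_def by simp
  then have "continuous_on C (\<lambda>k. (z \<bullet> k) / (u0 \<bullet> k))" using b by (intro continuous_intros) force
  ultimately obtain ks where ks: "ks \<in> C" "\<And>k. k \<in> C \<Longrightarrow> (z \<bullet> ks) / (u0 \<bullet> ks) \<le> (z \<bullet> k) / (u0 \<bullet> k)"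
    using continuous_attains_inf[of C "\<lambda>k. (z \<bullet> k) / (u0 \<bullet> k)"] by blast
  define lam where "lam = (z \<bullet> ks) / (u0 \<bullet> ks)"
  have C_nonneg: "0 \<le> (z - lam *\<^sub>R u0) \<bullet> k" if "k \<in> C" for k
  proof -
    have "lam * (u0 \<bullet> k) \<le> z \<bullet> k" using ks(2)[OF that] pos[OF that] b unfolding lam_def by (simp add: le_divide_eq)
    then show ?thesis by (simp add: inner_diff_left)
  qed
  have "0 \<le> (z - lam *\<^sub>R u0) \<bullet> k" if "k \<in> K" for k
  proof (cases "k = 0")
    case False
    then have "0 \<le> (z - lam *\<^sub>R u0) \<bullet> ((1 / norm k) *\<^sub>R k)"
      using C_nonneg normalize_in_K_sphere[OF that] unfolding C_def by blast
    then show ?thesis using False by (simp add: zero_le_divide_iff)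
  qed simp
  then have "z - lam *\<^sub>R u0 \<in> dual_cone K" unfolding dual_cone_def by blast
  moreover have "(z - lam *\<^sub>R u0) \<bullet> ks = 0"
    unfolding lam_def using pos[OF ks(1)] b by (simp add: inner_diff_left)
  moreover have "ks \<in> K" "ks \<noteq> 0" using ks(1) unfolding C_def by auto
  ultimately show thesis using that by blast
qed

lemma exists_boundary_pair:
  assumes R: "subspace R" "R \<inter> K \<subseteq> {0}" "dim R + 2 \<le> DIM('v)"
  obtains u k where "u \<in> dual_cone K" "u \<noteq> 0" "k \<in> K" "k \<noteq> 0" "u \<bullet> k = 0" "\<And>r. r \<in> R \<Longrightarrow> u \<bullet> r = 0"
proof -
  obtain b u0 where ub: "b > 0" "\<And>r. r \<in> R \<Longrightarrow> u0 \<bullet> r = 0" "\<And>k. k \<in> K \<Longrightarrow> u0 \<bullet> k \<ge> b * norm k"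
    using R(2) by (rule gordan_alternative[OF R(1)]) blast
  have "\<not> orthogonal_comp R \<subseteq> span {u0}"
  proof
    assume "orthogonal_comp R \<subseteq> span {u0}"
    then have "dim (orthogonal_comp R) \<le> dim (span {u0})" by (rule dim_subset)
    also have "\<dots> \<le> 1" by simp
    finally show False using dim_orthogonal_comp[OF R(1)] R(3) by simp
  qed
  then obtain z where z: "z \<in> orthogonal_comp R" "z \<notin> span {u0}" by blast
  obtain lam k where u: "z - lam *\<^sub>R u0 \<in> dual_cone K" and k: "k \<in> K" "k \<noteq> 0" "(z - lam *\<^sub>R u0) \<bullet> k = 0"
    using tilt_into_dual_cone[OF ub(1,3)] by blast
  moreover have "z - lam *\<^sub>R u0 \<noteq> 0"
    using z(2) span_scale[OF span_base[of u0 "{u0}"], of lam] by auto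
  moreover have "(z - lam *\<^sub>R u0) \<bullet> r = 0" if "r \<in> R" for r
  proof -
    have "z \<bullet> r = 0" using z(1) that unfolding orthogonal_comp_def orthogonal_def by (simp add: inner_commute)
    then show ?thesis using ub(2)[OF that] by (simp add: inner_diff_left)
  qed
  ultimately show ?thesis using that by blast
qed

lemma Sigma_m_nonempty:
  assumes "1 \<le> m" "m < DIM('v)"
  shows "Sigma_m K m \<noteq> {}"
proof -
  have s0: "subspace {0::'v}" by (auto simp: subspace_def)
  obtain u k where uk: "u \<in> dual_cone K" "u \<noteq> 0" "k \<in> K" "k \<noteq> 0" "u \<bullet> k = 0" "\<And>r. r \<in> {0} \<Longrightarrow> u \<bullet> r = 0"
    by (rule exists_boundary_pair[OF s0]) (use assms in auto)
  have dm: "dim (insert k {0::'v}) \<le> m" using assms uk(4) by (simp add: dim_insert)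
  obtain L' where "L' \<in> Sigma_m K m" "{0} \<subseteq> L'"
    using Sigma_m_superspace[OF s0 uk(1) uk(2) uk(3) uk(4) uk(5) uk(6) dm assms(2)] by blast
  then show ?thesis by blast
qed

lemma Sigma_mD:
  assumes "L' \<in> Sigma_m K m"
  shows "subspace L'" and "\<exists>k\<in>L'. k \<in> K \<and> k \<noteq> 0"
    and "\<exists>u\<in>dual_cone K. u \<noteq> 0 \<and> (\<forall>v\<in>L'. u \<bullet> v = 0)"
proof -
  have h: "subspace L'" "L' \<inter> K \<noteq> {0}" "orthogonal_comp L' \<inter> dual_cone K \<noteq> {0}"
    using assms unfolding Sigma_m_def Gr_def by auto
  show "subspace L'" by (rule h(1))
  show "\<exists>k\<in>L'. k \<in> K \<and> k \<noteq> 0" using h(1,2) subspace_0 zero_in_K by blast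
  have "0 \<in> orthogonal_comp L'" "0 \<in> dual_cone K" by (simp_all add: orthogonal_comp_def orthogonal_def dual_cone_def)
  then obtain u where "u \<in> orthogonal_comp L'" "u \<in> dual_cone K" "u \<noteq> 0" using h(3) by blast
  then show "\<exists>u\<in>dual_cone K. u \<noteq> 0 \<and> (\<forall>v\<in>L'. u \<bullet> v = 0)"
    unfolding orthogonal_comp_def orthogonal_def by (auto simp: inner_commute)
qed

end

context conic_system
begin

lemma ill_posed_range_in_Sigma_m:
  assumes B: "B \<in> ill_posed_set nW n2 K" and mW: "DIM('w) = m" "m < DIM('v)"
  obtains L' where "L' \<in> Sigma_m K m" "range B \<subseteq> L'"
proof -
  have lin: "linear B" and nP: "\<not> robust_primal B" and nD: "\<not> robust_dual B" using B ill_posed_set_iff by auto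
  define R where "R = range B"
  have sR: "subspace R" unfolding R_def by (rule linear_subspace_image[OF lin subspace_UNIV])
  have dR: "dim R \<le> m"
  proof -
    have "dim R \<le> dim (UNIV :: 'w set)" unfolding R_def by (rule dim_image_le[OF lin])
    then show ?thesis using mW(1) by simp
  qed
  have noint: "R \<inter> interior K = {}"
  proof (rule ccontr)
    assume "R \<inter> interior K \<noteq> {}"
    then obtain w0 where "B w0 \<in> interior K" unfolding R_def by blast
    then show False using robust_primal_if_interior_point[OF lin] nP by blast
  qed
  have "\<exists>u k. u \<in> dual_cone K \<and> u \<noteq> 0 \<and> k \<in> K \<and> k \<noteq> 0 \<and> u \<bullet> k = 0 \<and> (\<forall>r\<in>R. u \<bullet> r = 0)
    \<and> dim (insert k R) \<le> m"
  proof (cases "\<exists>k\<in>R. k \<in> K \<and> k \<noteq> 0")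
    case True
    then obtain k where k: "k \<in> R" "k \<in> K" "k \<noteq> 0" by blast
    obtain u where u: "u \<in> dual_cone K" "u \<noteq> 0" "\<And>r. r \<in> R \<Longrightarrow> u \<bullet> r = 0"
      by (rule separate_subspace_from_interior[OF sR noint]) blast
    have "k \<in> span R" using k(1) span_superset by blast
    then have "dim (insert k R) \<le> m" using dR by (simp add: dim_insert)
    then show ?thesis using k u by blast
  next
    case False
    then have RK: "R \<inter> K \<subseteq> {0}" by blast
    then have "\<not> inj B" using robust_dual_if_inj[OF lin] nD unfolding R_def by blast
    then have "dim R < m" using dim_range_lt_if_not_inj[OF lin] mW(1) unfolding R_def by simp
    then have "dim R + 2 \<le> DIM('v)" using mW(2) by simp
    then obtain u k where uk: "u \<in> dual_cone K" "u \<noteq> 0" "k \<in> K" "k \<noteq> 0" "u \<bullet> k = 0"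
      "\<And>r. r \<in> R \<Longrightarrow> u \<bullet> r = 0"
      by (rule exists_boundary_pair[OF sR RK]) blast
    have "dim (insert k R) \<le> m" using \<open>dim R < m\<close> by (simp add: dim_insert)
    then show ?thesis using uk by blast
  qed
  then obtain u k where "u \<in> dual_cone K" "u \<noteq> 0" "k \<in> K" "k \<noteq> 0" "u \<bullet> k = 0"
    "\<And>r. r \<in> R \<Longrightarrow> u \<bullet> r = 0" "dim (insert k R) \<le> m" by blast
  then obtain L' where "L' \<in> Sigma_m K m" "R \<subseteq> L'" by (rule Sigma_m_superspace[OF sR _ _ _ _ _ _ _ mW(2)])
  then show ?thesis using that unfolding R_def by blast
qed

end

section \<open>Distances between subspaces\<close>

lemma is_norm_attains_min_on_hyperplane:
  fixes N :: "'a::euclidean_space \<Rightarrow> real"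
  assumes N: "is_norm N" and u: "u \<noteq> 0"
  obtains y where "u \<bullet> y = 1" "\<And>z. u \<bullet> z = 1 \<Longrightarrow> N y \<le> N z"
proof -
  define y0 where "y0 = (1 / (u \<bullet> u)) *\<^sub>R u"
  have y0: "u \<bullet> y0 = 1" using u by (simp add: y0_def)
  define S where "S = {z. u \<bullet> z = 1} \<inter> {z. N z \<le> N y0}"
  obtain c where c: "c > 0" "\<And>x. c * norm x \<le> N x" using is_norm_lower_bound[OF N] by blast
  have "closed S" unfolding S_def
    by (intro closed_Int closed_hyperplane closed_Collect_le is_norm_continuous_on[OF N] continuous_on_const)
  moreover have "S \<subseteq> cball 0 (N y0 / c)"
  proof
    fix z assume "z \<in> S"
    then have "c * norm z \<le> N y0" using c(2)[of z] unfolding S_def by auto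
    then show "z \<in> cball 0 (N y0 / c)" using c(1) by (simp add: field_simps)
  qed
  ultimately have "compact S" by (metis bounded_cball bounded_subset compact_eq_bounded_closed)
  moreover have "S \<noteq> {}" unfolding S_def using y0 by auto
  ultimately obtain y where y: "y \<in> S" "\<And>z. z \<in> S \<Longrightarrow> N y \<le> N z"
    using continuous_attains_inf[OF _ _ is_norm_continuous_on[OF N]] by meson
  have "N y \<le> N z" if "u \<bullet> z = 1" for z
    using y that unfolding S_def by (cases "N z \<le> N y0") auto
  then show thesis using that y(1) unfolding S_def by blast
qed

lemma is_norm_unit_ball:
  fixes M :: "'a::euclidean_space \<Rightarrow> real"
  assumes M: "is_norm M"
  shows "closed {x. M x \<le> 1}" "convex {x. M x \<le> 1}"
proof -
  show "closed {x. M x \<le> 1}" using is_norm_continuous_on[OF M, of UNIV] by (simp add: closed_Collect_le)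
  have "M (u *\<^sub>R x + v *\<^sub>R y) \<le> 1" if "M x \<le> 1" "M y \<le> 1" "0 \<le> u" "0 \<le> v" "u + v = 1" for x y u v
  proof -
    have "M (u *\<^sub>R x + v *\<^sub>R y) \<le> u * M x + v * M y" using is_normD(3,4)[OF M] that by (metis abs_of_nonneg)
    also have "\<dots> \<le> u + v" using that by (intro add_mono mult_left_le) auto
    finally show ?thesis using that by simp
  qed
  then show "convex {x. M x \<le> 1}" unfolding convex_def by blast
qed

lemma is_norm_functional_bound:
  fixes M :: "'a::euclidean_space \<Rightarrow> real"
  assumes M: "is_norm M" and ball: "\<And>x. M x \<le> 1 \<Longrightarrow> b < a \<bullet> x"
  shows "\<bar>a \<bullet> z\<bar> \<le> - b * M z"
proof (cases "z = 0")
  case False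
  then have Mz: "M z > 0" using is_norm_pos[OF M] by blast
  have "M ((1 / M z) *\<^sub>R z) \<le> 1" "M ((- 1 / M z) *\<^sub>R z) \<le> 1" using is_normD(3)[OF M] is_norm_minus[OF M] Mz by simp_all
  then have "b < (a \<bullet> z) / M z" "b < - (a \<bullet> z) / M z" using ball by fastforce+
  then show ?thesis using Mz by (simp add: field_simps)
qed (use ball[of 0] is_norm_zero[OF M] in simp)

lemma approx_norming_functional:
  fixes M :: "'a::euclidean_space \<Rightarrow> real"
  assumes M: "is_norm M" and w: "w \<noteq> 0" and \<gamma>: "\<gamma> > 0"
  obtains a where "a \<bullet> w = 1" "\<And>z. \<bar>a \<bullet> z\<bar> \<le> (1 + \<gamma>) * M z / M w"
proof -
  have Mw: "M w > 0" using is_norm_pos[OF M w] .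
  define p where "p = ((1 + \<gamma>) / M w) *\<^sub>R w"
  have "M p = 1 + \<gamma>" unfolding p_def using is_normD(3)[OF M] Mw \<gamma> by simp
  then obtain a b where ab: "a \<bullet> p < b" "\<And>x. M x \<le> 1 \<Longrightarrow> b < a \<bullet> x"
    using separating_hyperplane_closed_point[OF is_norm_unit_ball(2,1)[OF M], of p] \<gamma> by auto
  have bound: "\<bar>a \<bullet> z\<bar> \<le> - b * M z" for z by (rule is_norm_functional_bound[OF M ab(2)])
  define aw where "aw = - (a \<bullet> w)"
  have "- b * M w < (1 + \<gamma>) * aw" using ab(1) Mw unfolding p_def aw_def by (simp add: field_simps)
  moreover have "b < 0" using ab(2)[of 0] is_norm_zero[OF M] by simp
  moreover have "0 < - b * M w" using \<open>b < 0\<close> Mw by (simp add: mult_neg_pos)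
  ultimately have "0 < (1 + \<gamma>) * aw" by linarith
  then have "aw > 0" using \<gamma> by (simp add: zero_less_mult_iff)
  then have aw: "aw > 0" "- b / aw \<le> (1 + \<gamma>) / M w"
    using \<open>- b * M w < (1 + \<gamma>) * aw\<close> Mw by (simp_all add: field_simps)
  show thesis
  proof
    show "((- 1 / aw) *\<^sub>R a) \<bullet> w = 1" unfolding aw_def using aw(1) aw_def by (simp add: field_simps)
    fix z
    have "\<bar>((- 1 / aw) *\<^sub>R a) \<bullet> z\<bar> \<le> - b / aw * M z"
      using bound[of z] aw(1) by (simp add: abs_mult field_simps)
    also have "\<dots> \<le> (1 + \<gamma>) / M w * M z" using aw(2) is_normD(1)[OF M] by (rule mult_right_mono)
    finally show "\<bar>((- 1 / aw) *\<^sub>R a) \<bullet> z\<bar> \<le> (1 + \<gamma>) * M z / M w" by simp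
  qed
qed

context
  fixes n1 n2 :: "'v::euclidean_space \<Rightarrow> real"
  assumes n1: "is_norm n1" and n2: "is_norm n2"
begin

lemma bdd_below_dist_ratio:
  "bdd_below ((\<lambda>v. n2 (x - v) / n1 x) ` L)" "bdd_below ((\<lambda>v. n2 (x - v) / n1 v) ` L)"
  using is_normD(1)[OF n1] is_normD(1)[OF n2] by (auto intro!: bdd_belowI[of _ 0])

lemma bdd_above_subsp_dist:
  assumes "0 \<in> L2"
  shows "bdd_above ((\<lambda>x. INF v\<in>L2. n2 (x - v) / n1 x) ` (L1 - {0}))"
proof -
  obtain C where C: "C > 0" "\<And>x. n2 x \<le> C * n1 x" using is_norm_equiv[OF n1 n2] by blast
  have "(INF v\<in>L2. n2 (x - v) / n1 x) \<le> C" if "x \<in> L1 - {0}" for x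
  proof (rule cINF_lower2[OF bdd_below_dist_ratio(1) assms])
    show "n2 (x - 0) / n1 x \<le> C" using C(2)[of x] is_norm_pos[OF n1, of x] that by (simp add: divide_le_eq)
  qed
  then show ?thesis by (intro bdd_aboveI[of _ C]) auto
qed

lemma subsp_dist_ge:
  assumes "0 \<in> L2" "x \<in> L1" "x \<noteq> 0"
  shows "(INF v\<in>L2. n2 (x - v) / n1 x) \<le> subsp_dist n1 n2 L1 L2"
  unfolding subsp_dist_def using assms by (intro cSUP_upper bdd_above_subsp_dist) auto

lemma subsp_dist_nonneg:
  assumes "0 \<in> L2" "x \<in> L1" "x \<noteq> 0"
  shows "subsp_dist n1 n2 L1 L2 \<ge> 0"
proof -
  have "0 \<le> (INF v\<in>L2. n2 (x - v) / n1 x)"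
    using assms(1) is_normD(1)[OF n1] is_normD(1)[OF n2] by (intro cINF_greatest) auto
  then show ?thesis using subsp_dist_ge[OF assms] by linarith
qed

lemma subsp_dist_le:
  assumes "L1 - {0} \<noteq> {}" "\<And>x. x \<in> L1 \<Longrightarrow> x \<noteq> 0 \<Longrightarrow> \<exists>v\<in>L2. n2 (x - v) / n1 x \<le> c"
  shows "subsp_dist n1 n2 L1 L2 \<le> c"
  unfolding subsp_dist_def
proof (rule cSUP_least[OF assms(1)])
  fix x assume "x \<in> L1 - {0}"
  then obtain v where "v \<in> L2" "n2 (x - v) / n1 x \<le> c" using assms(2) by blast
  then show "(INF v\<in>L2. n2 (x - v) / n1 x) \<le> c" by (rule cINF_lower2[OF bdd_below_dist_ratio(1)])
qed

text \<open>Here \<open>y\<close> realises the \<open>n2\<close>-distance from the origin to the hyperplane \<open>u \<bullet> z = 1\<close>.\<close>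

lemma functional_le_subsp_dist:
  assumes L2: "0 \<in> L2" "\<And>v. v \<in> L2 \<Longrightarrow> u \<bullet> v = 0"
    and y: "\<And>z. u \<bullet> z = 1 \<Longrightarrow> n2 y \<le> n2 z" and x: "x \<in> L1"
  shows "n2 y * \<bar>u \<bullet> x\<bar> \<le> subsp_dist n1 n2 L1 L2 * n1 x"
proof (cases "u \<bullet> x = 0")
  case False
  then have "x \<noteq> 0" by auto
  have "n2 y * \<bar>u \<bullet> x\<bar> \<le> n2 (x - v)" if v: "v \<in> L2" for v
  proof -
    have "n2 y \<le> n2 ((1 / (u \<bullet> x)) *\<^sub>R (x - v))"
      using L2(2)[OF v] False by (intro y) (simp add: inner_diff_right)
    also have "\<dots> = n2 (x - v) / \<bar>u \<bullet> x\<bar>" using is_normD(3)[OF n2, of "1 / (u \<bullet> x)" "x - v"] by simp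
    finally show ?thesis using False by (simp add: field_simps)
  qed
  then have "n2 y * \<bar>u \<bullet> x\<bar> / n1 x \<le> (INF v\<in>L2. n2 (x - v) / n1 x)"
    using L2(1) is_norm_pos[OF n1 \<open>x \<noteq> 0\<close>] by (intro cINF_greatest) (auto simp: divide_right_mono)
  also have "\<dots> \<le> subsp_dist n1 n2 L1 L2" using subsp_dist_ge[OF L2(1) x \<open>x \<noteq> 0\<close>] .
  finally show ?thesis using is_norm_pos[OF n1 \<open>x \<noteq> 0\<close>] by (simp add: divide_le_eq)
next
  case True
  then show ?thesis
    using subsp_dist_nonneg[OF L2(1) x] is_normD(1)[OF n1, of x] is_norm_zero[OF n1] by (cases "x = 0") auto
qed

text \<open>Letting \<open>v\<close> run to infinity along the line through \<open>v0\<close> shows that no point is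
  farther, in the sense of \<open>subsp_distbar\<close>, from such a line than the ratio \<open>n2 v0 / n1 v0\<close>.\<close>

lemma INF_distbar_le_ratio:
  assumes v0: "v0 \<noteq> 0" "\<And>c. c *\<^sub>R v0 \<in> L2"
  shows "(INF v\<in>L2 - {0}. n2 (x - v) / n1 v) \<le> n2 v0 / n1 v0"
proof (rule field_le_epsilon)
  fix e :: real assume e: "e > 0"
  have nv0: "n1 v0 > 0" using is_norm_pos[OF n1 v0(1)] .
  define t where "t = (n2 x + 1) / (e * n1 v0)"
  have t: "t > 0" unfolding t_def using e nv0 is_normD(1)[OF n2, of x] by (simp add: add_nonneg_pos)
  have "n2 (x - t *\<^sub>R v0) / n1 (t *\<^sub>R v0) \<le> (n2 x + t * n2 v0) / (t * n1 v0)"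
    using is_norm_triangle_diff[OF n2, of x "t *\<^sub>R v0"] is_normD(3)[OF n1] is_normD(3)[OF n2] t nv0
    by (simp add: divide_right_mono)
  also have "\<dots> = n2 x / (t * n1 v0) + n2 v0 / n1 v0" using t nv0 by (simp add: add_divide_distrib)
  also have "n2 x / (t * n1 v0) = e * (n2 x / (n2 x + 1))"
  proof -
    have "t * n1 v0 = (n2 x + 1) / e" unfolding t_def using nv0 by simp
    then show ?thesis by (simp add: mult.commute)
  qed
  also have "\<dots> \<le> e"
    using e is_normD(1)[OF n2, of x] by (intro mult_left_le) simp_all
  finally show "(INF v\<in>L2 - {0}. n2 (x - v) / n1 v) \<le> n2 v0 / n1 v0 + e"
    using v0 t by (intro cINF_lower2[OF bdd_below_dist_ratio(2), of "t *\<^sub>R v0"]) auto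
qed

lemma subsp_distbar_ge:
  assumes v0: "v0 \<noteq> 0" "\<And>c. c *\<^sub>R v0 \<in> L2" and x: "x \<in> L1" "x \<noteq> 0"
  shows "(INF v\<in>L2 - {0}. n2 (x - v) / n1 v) \<le> subsp_distbar n1 n2 L1 L2"
  unfolding subsp_distbar_def using x INF_distbar_le_ratio[OF v0]
  by (intro cSUP_upper bdd_aboveI[of _ "n2 v0 / n1 v0"]) auto

lemma subsp_distbar_nonneg:
  assumes v0: "v0 \<noteq> 0" "\<And>c. c *\<^sub>R v0 \<in> L2" and x: "x \<in> L1" "x \<noteq> 0"
  shows "subsp_distbar n1 n2 L1 L2 \<ge> 0"
proof -
  have "0 \<le> (INF v\<in>L2 - {0}. n2 (x - v) / n1 v)"
    using v0 is_normD(1)[OF n1] is_normD(1)[OF n2] by (intro cINF_greatest) force+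
  then show ?thesis using subsp_distbar_ge[OF assms] by linarith
qed

lemma subsp_distbar_le:
  assumes "L1 - {0} \<noteq> {}" "\<And>x. x \<in> L1 \<Longrightarrow> x \<noteq> 0 \<Longrightarrow> (INF v\<in>L2 - {0}. n2 (x - v) / n1 v) \<le> c"
  shows "subsp_distbar n1 n2 L1 L2 \<le> c"
  unfolding subsp_distbar_def using assms by (intro cSUP_least) auto

end

section \<open>Distance to \<open>\<Sigma>\<^sub>m\<close> versus distance to ill-posedness\<close>

lemma norm_diff_le_inv_opnorm_mul:
  fixes A B :: "'w::euclidean_space \<Rightarrow> 'v::euclidean_space"
  assumes nW: "is_norm nW" and n1: "is_norm n1" and n2: "is_norm n2"
    and A: "linear A" "inj A" and B: "linear B"
  shows "n2 (A w - B w) \<le> inv_opnorm nW n1 A * opnorm nW n2 (\<lambda>w. A w - B w) * n1 (A w)"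
proof -
  have "n2 (A w - B w) \<le> opnorm nW n2 (\<lambda>w. A w - B w) * nW w"
    using opnorm_bound[OF nW n2 linear_compose_sub[OF A(1) B]] by simp
  also have "\<dots> \<le> opnorm nW n2 (\<lambda>w. A w - B w) * (inv_opnorm nW n1 A * n1 (A w))"
    using inv_opnorm_bound[OF nW n1 A] opnorm_nonneg[OF nW n2 linear_compose_sub[OF A(1) B]]
    by (rule mult_left_mono)
  finally show ?thesis by (simp add: ac_simps)
qed

context conic_system
begin

lemma Rdist_le_opnorm_mul_subsp_dist:
  assumes n1: "is_norm n1" and A: "linear A" "robust_primal A" and L': "L' \<in> Sigma_m K m"
  shows "Rdist nW n2 K A \<le> opnorm nW n1 A * subsp_dist n1 n2 (range A) L'"
proof -
  obtain u where L'u: "subspace L'" "u \<in> dual_cone K" "u \<noteq> 0" "\<And>v. v \<in> L' \<Longrightarrow> u \<bullet> v = 0"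
    using Sigma_mD[OF L'] by blast
  obtain y where y: "u \<bullet> y = 1" "\<And>z. u \<bullet> z = 1 \<Longrightarrow> n2 y \<le> n2 z"
    using is_norm_attains_min_on_hyperplane[OF n2 L'u(3)] by blast
  define \<delta> where "\<delta> = subsp_dist n1 n2 (range A) L'"
  obtain w1 where "A w1 \<noteq> 0" using robustly_imp[OF A(2,1)] unfolding primal_feasible_def by blast
  then have "\<delta> \<ge> 0" unfolding \<delta>_def by (rule subsp_dist_nonneg[OF n1 n2 subspace_0[OF L'u(1)] rangeI])
  define A' where "A' = (\<lambda>w. A w - (u \<bullet> A w) *\<^sub>R y)"
  have "linear A'" unfolding A'_def using A(1)
    by (intro linearI) (simp_all add: linear_add linear_scale algebra_simps)
  have "u \<bullet> A' w = 0" for w unfolding A'_def using y(1) by (simp add: inner_diff_right)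
  then have "dual_feasible K A'" unfolding dual_feasible_def adjoint_eq_0_iff[OF \<open>linear A'\<close>] using L'u(2,3) by blast
  then have "\<not> robust_primal A'" using robust_primal_imp_not_dual_feasible[OF \<open>linear A'\<close>] by blast
  then have "Rdist nW n2 K A \<le> opnorm nW n2 (\<lambda>w. A' w - A w)"
    using A(2) by (intro Rdist_le_of_status_change[OF A(1) \<open>linear A'\<close>]) simp
  also have "\<dots> \<le> opnorm nW n1 A * \<delta>"
  proof (rule opnorm_le[OF nW])
    fix w
    have "n2 (A' w - A w) = n2 y * \<bar>u \<bullet> A w\<bar>" unfolding A'_def using is_normD(3)[OF n2] is_norm_minus[OF n2] by simp
    also have "\<dots> \<le> \<delta> * n1 (A w)" unfolding \<delta>_def
      using functional_le_subsp_dist[OF n1 n2 subspace_0[OF L'u(1)] L'u(4) y(2) rangeI] .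
    also have "\<dots> \<le> \<delta> * (opnorm nW n1 A * nW w)"
      using opnorm_bound[OF nW n1 A(1)] \<open>\<delta> \<ge> 0\<close> by (rule mult_left_mono)
    finally show "n2 (A' w - A w) \<le> opnorm nW n1 A * \<delta> * nW w" by (simp add: ac_simps)
  qed
  finally show ?thesis unfolding \<delta>_def .
qed

lemma subsp_dist_le_inv_opnorm_mul:
  assumes n1: "is_norm n1" and A: "linear A" "inj A" and B: "B \<in> ill_posed_set nW n2 K"
    and m: "DIM('w) = m" "m < DIM('v)"
  obtains L' where "L' \<in> Sigma_m K m"
    "subsp_dist n1 n2 (range A) L' \<le> inv_opnorm nW n1 A * opnorm nW n2 (\<lambda>w. A w - B w)"
proof -
  have lB: "linear B" using B ill_posed_set_iff by blast
  obtain L' where L': "L' \<in> Sigma_m K m" "range B \<subseteq> L'" using ill_posed_range_in_Sigma_m[OF B m] by blast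
  obtain w0 :: 'w where "w0 \<noteq> 0" using ex_nonzero_euclidean by blast
  then have "range A - {0} \<noteq> {}" using A linear_injective_0 by blast
  then have "subsp_dist n1 n2 (range A) L' \<le> inv_opnorm nW n1 A * opnorm nW n2 (\<lambda>w. A w - B w)"
  proof (rule subsp_dist_le[OF n1 n2])
    fix x assume x: "x \<in> range A" "x \<noteq> 0"
    then obtain w where w: "x = A w" by blast
    have "B w \<in> L'" using L'(2) by blast
    moreover have "n2 (x - B w) / n1 x \<le> inv_opnorm nW n1 A * opnorm nW n2 (\<lambda>w. A w - B w)"
      using norm_diff_le_inv_opnorm_mul[OF nW n1 n2 A lB, of w] is_norm_pos[OF n1 x(2)] w
      by (simp add: divide_le_eq)
    ultimately show "\<exists>v\<in>L'. n2 (x - v) / n1 x \<le> inv_opnorm nW n1 A * opnorm nW n2 (\<lambda>w. A w - B w)" by blast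
  qed
  then show thesis using that L'(1) by blast
qed

text \<open>Sending \<open>A w\<close> to the cone point \<open>k\<close> by a rank-one perturbation makes the system primal
  feasible; an approximate Hahn--Banach functional at \<open>w\<close> keeps the perturbation's norm near
  \<open>n2 (k - A w) / nW w\<close>.\<close>

lemma Rdist_le_via_cone_point:
  assumes A: "linear A" "robust_dual A" and k: "k \<in> K" "k \<noteq> 0" and w: "w \<noteq> 0" and \<gamma>: "\<gamma> > 0"
  shows "Rdist nW n2 K A \<le> (1 + \<gamma>) * n2 (k - A w) / nW w"
proof -
  obtain a where a: "a \<bullet> w = 1" "\<And>z. \<bar>a \<bullet> z\<bar> \<le> (1 + \<gamma>) * nW z / nW w"
    using approx_norming_functional[OF nW w \<gamma>] by blast
  define A' where "A' = (\<lambda>z. A z + (a \<bullet> z) *\<^sub>R (k - A w))"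
  have "linear A'" unfolding A'_def
    using linear_add_rank_one[OF A(1) bounded_linear_inner_right[of a, THEN bounded_linear.linear], of 1] by simp
  have "A' w = k" unfolding A'_def using a(1) by simp
  then have "primal_feasible K A'" unfolding primal_feasible_def using k by blast
  then have "\<not> robust_dual A'" using robust_dual_imp_not_primal_feasible[OF \<open>linear A'\<close>] by blast
  then have "Rdist nW n2 K A \<le> opnorm nW n2 (\<lambda>z. A' z - A z)"
    using A(2) by (intro Rdist_le_of_status_change[OF A(1) \<open>linear A'\<close>]) simp
  also have "\<dots> \<le> (1 + \<gamma>) * n2 (k - A w) / nW w"
  proof (rule opnorm_le[OF nW])
    fix z
    have "n2 (A' z - A z) = \<bar>a \<bullet> z\<bar> * n2 (k - A w)" unfolding A'_def using is_normD(3)[OF n2] by simp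
    also have "\<dots> \<le> (1 + \<gamma>) * nW z / nW w * n2 (k - A w)"
      using a(2)[of z] is_normD(1)[OF n2, of "k - A w"] by (rule mult_right_mono)
    finally show "n2 (A' z - A z) \<le> (1 + \<gamma>) * n2 (k - A w) / nW w * nW z" by (simp add: field_simps)
  qed
  finally show ?thesis .
qed

lemma Rdist_le_opnorm_mul_subsp_distbar:
  assumes n1: "is_norm n1" and A: "linear A" "inj A" "robust_dual A" and L': "L' \<in> Sigma_m K m"
  shows "Rdist nW n2 K A \<le> opnorm nW n1 A * subsp_distbar n1 n2 L' (range A)"
proof -
  obtain k where k: "k \<in> L'" "k \<in> K" "k \<noteq> 0" using Sigma_mD(2)[OF L'] by blast
  obtain w0 :: 'w where "w0 \<noteq> 0" using ex_nonzero_euclidean by blast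
  then have Aw0: "A w0 \<noteq> 0" using A linear_injective_0 by blast
  have line: "c *\<^sub>R A w0 \<in> range A" for c using linear_scale[OF A(1), of c w0] by (metis rangeI)
  define \<delta> where "\<delta> = subsp_distbar n1 n2 L' (range A)"
  define NA where "NA = opnorm nW n1 A"
  have "\<delta> \<ge> 0" unfolding \<delta>_def by (rule subsp_distbar_nonneg[OF n1 n2 Aw0 line k(1,3)])
  have approx: "Rdist nW n2 K A \<le> (1 + \<gamma>) * ((\<delta> + \<gamma>) * NA)" if \<gamma>: "\<gamma> > 0" for \<gamma>
  proof -
    have "(INF v\<in>range A - {0}. n2 (k - v) / n1 v) < \<delta> + \<gamma>"
      using subsp_distbar_ge[OF n1 n2 Aw0 line k(1,3)] \<gamma> unfolding \<delta>_def by simp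
    moreover have "range A - {0} \<noteq> {}" using Aw0 by blast
    ultimately obtain v where v: "v \<in> range A - {0}" "n2 (k - v) / n1 v < \<delta> + \<gamma>"
      using cINF_less_iff[OF _ bdd_below_dist_ratio(2)[OF n1 n2, of k "range A - {0}"]] by blast
    then obtain w where w: "v = A w" "w \<noteq> 0" using linear_0[OF A(1)] by auto
    have "n2 (k - v) \<le> (\<delta> + \<gamma>) * n1 v" using v is_norm_pos[OF n1] by (simp add: divide_less_eq)
    also have "\<dots> \<le> (\<delta> + \<gamma>) * (NA * nW w)"
      unfolding w(1) NA_def using opnorm_bound[OF nW n1 A(1)] \<open>\<delta> \<ge> 0\<close> \<gamma> by (intro mult_left_mono) auto
    finally have "n2 (k - A w) / nW w \<le> (\<delta> + \<gamma>) * NA"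
      using is_norm_pos[OF nW w(2)] w(1) by (simp add: divide_le_eq mult_ac)
    then have "(1 + \<gamma>) * (n2 (k - A w) / nW w) \<le> (1 + \<gamma>) * ((\<delta> + \<gamma>) * NA)"
      using \<gamma> by (intro mult_left_mono) auto
    then show ?thesis using Rdist_le_via_cone_point[OF A(1,3) k(2,3) w(2) \<gamma>] by simp
  qed
  have "((\<lambda>\<gamma>. (1 + \<gamma>) * ((\<delta> + \<gamma>) * NA)) \<longlongrightarrow> (1 + 0) * ((\<delta> + 0) * NA)) (at_right 0)"
    by (intro tendsto_intros)
  then have "Rdist nW n2 K A \<le> (1 + 0) * ((\<delta> + 0) * NA)"
  proof (rule tendsto_lowerbound)
    show "\<forall>\<^sub>F \<gamma> in at_right 0. Rdist nW n2 K A \<le> (1 + \<gamma>) * ((\<delta> + \<gamma>) * NA)"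
      using approx by (intro eventually_at_rightI[of 0 1]) auto
  qed (rule trivial_limit_at_right_real)
  then show ?thesis unfolding \<delta>_def NA_def by (simp add: mult.commute)
qed

lemma range_in_Sigma_m_if_inj_ill_posed:
  assumes B: "B \<in> ill_posed_set nW n2 K" "inj B" and m: "DIM('w) = m"
  shows "range B \<in> Sigma_m K m"
proof -
  have lB: "linear B" and nP: "\<not> robust_primal B" and nD: "\<not> robust_dual B"
    using B(1) ill_posed_set_iff by auto
  have sub: "subspace (range B)" by (rule linear_subspace_image[OF lB subspace_UNIV])
  have "dim (range B) = m" using dim_image_eq[OF lB, of UNIV] B(2) m by (simp add: inj_on_def)
  moreover have "range B \<inter> K \<noteq> {0}"
    using robust_dual_if_inj[OF lB B(2)] nD zero_in_K by blast
  moreover have "range B \<inter> interior K = {}"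
    using robust_primal_if_interior_point[OF lB] nP by blast
  then obtain u where u: "u \<in> dual_cone K" "u \<noteq> 0" "\<And>r. r \<in> range B \<Longrightarrow> u \<bullet> r = 0"
    using separate_subspace_from_interior[OF sub] by blast
  have "orthogonal r u" if "r \<in> range B" for r using u(3)[OF that] by (simp add: orthogonal_def inner_commute)
  then have "u \<in> orthogonal_comp (range B)" unfolding orthogonal_comp_def by blast
  then have "orthogonal_comp (range B) \<inter> dual_cone K \<noteq> {0}" using u(1,2) by blast
  ultimately show ?thesis unfolding Sigma_m_def Gr_def using sub by simp
qed

lemma subsp_distbar_le_inv_opnorm_mul:
  assumes n1: "is_norm n1" and A: "linear A" "inj A" and B: "B \<in> ill_posed_set nW n2 K"
    and m: "DIM('w) = m" "m < DIM('v)"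
  obtains L' where "L' \<in> Sigma_m K m"
    "subsp_distbar n1 n2 L' (range A) \<le> inv_opnorm nW n1 A * opnorm nW n2 (\<lambda>w. A w - B w)"
proof -
  define \<rho> where "\<rho> = inv_opnorm nW n1 A * opnorm nW n2 (\<lambda>w. A w - B w)"
  have lB: "linear B" using B ill_posed_set_iff by blast
  have AB: "n2 (A w - B w) \<le> \<rho> * n1 (A w)" for w
    unfolding \<rho>_def by (rule norm_diff_le_inv_opnorm_mul[OF nW n1 n2 A lB])
  have nz: "A w \<noteq> 0" if "w \<noteq> 0" for w using that A linear_injective_0 by blast
  show thesis
  proof (cases "inj B")
    case True
    have "subsp_distbar n1 n2 (range B) (range A) \<le> \<rho>"
    proof (rule subsp_distbar_le[OF n1 n2])
      obtain w0 :: 'w where "w0 \<noteq> 0" using ex_nonzero_euclidean by blast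
      then show "range B - {0} \<noteq> {}" using True lB linear_injective_0 by blast
      fix x assume "x \<in> range B" "x \<noteq> 0"
      then obtain w where w: "x = B w" "w \<noteq> 0" using linear_0[OF lB] by auto
      have "n2 (x - A w) / n1 (A w) \<le> \<rho>"
        using AB[of w] is_norm_pos[OF n1 nz[OF w(2)]] is_norm_minus_commute[OF n2, of "B w"] w(1)
        by (simp add: divide_le_eq)
      then show "(INF v\<in>range A - {0}. n2 (x - v) / n1 v) \<le> \<rho>"
        using nz[OF w(2)] by (intro cINF_lower2[OF bdd_below_dist_ratio(2)[OF n1 n2]]) auto
    qed
    then show thesis using that range_in_Sigma_m_if_inj_ill_posed[OF B True m(1)] unfolding \<rho>_def by blast
  next
    case False
    then obtain z where z: "B z = 0" "z \<noteq> 0" using linear_injective_0[OF lB] by blast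
    have "Sigma_m K m \<noteq> {}" using Sigma_m_nonempty m DIM_positive[where 'a='w] by simp
    then obtain L' where L': "L' \<in> Sigma_m K m" by blast
    then have "L' - {0} \<noteq> {}" using Sigma_mD(2) by blast
    then have "subsp_distbar n1 n2 L' (range A) \<le> n2 (A z) / n1 (A z)"
    proof (rule subsp_distbar_le[OF n1 n2])
      fix x
      show "(INF v\<in>range A - {0}. n2 (x - v) / n1 v) \<le> n2 (A z) / n1 (A z)"
        using linear_scale[OF A(1)] by (intro INF_distbar_le_ratio[OF n1 n2 nz[OF z(2)]]) (metis rangeI)
    qed
    also have "\<dots> \<le> \<rho>" using AB[of z] z(1) is_norm_pos[OF n1 nz[OF z(2)]] by (simp add: divide_le_eq)
    finally show thesis using that L' unfolding \<rho>_def by blast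
  qed
qed

end

lemma ratio_bounds_of_INF:
  fixes f :: "'a \<Rightarrow> real" and g :: "'b \<Rightarrow> real"
  assumes S: "S \<noteq> {}" "\<And>s. s \<in> S \<Longrightarrow> f s \<ge> 0" and T: "T \<noteq> {}"
    and pos: "(INF t\<in>T. g t) > 0" "a > 0" "b > 0"
    and lower: "\<And>s. s \<in> S \<Longrightarrow> (INF t\<in>T. g t) \<le> a * f s"
    and upper: "\<And>t. t \<in> T \<Longrightarrow> \<exists>s\<in>S. f s \<le> b * g t"
  shows "1 / a \<le> (INF s\<in>S. f s) / (INF t\<in>T. g t) \<and> (INF s\<in>S. f s) / (INF t\<in>T. g t) \<le> b"
proof -
  define d where "d = (INF s\<in>S. f s)"
  define R where "R = (INF t\<in>T. g t)"
  have "R / a \<le> d" unfolding d_def R_def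
    using lower pos(2) by (intro cINF_greatest[OF S(1)]) (simp add: divide_le_eq mult.commute)
  moreover have "d / b \<le> R" unfolding R_def
  proof (rule cINF_greatest[OF T])
    fix t assume "t \<in> T"
    then obtain s where "s \<in> S" "f s \<le> b * g t" using upper by blast
    moreover have "d \<le> f s" unfolding d_def using S(2) \<open>s \<in> S\<close> by (intro cINF_lower bdd_belowI[of _ 0]) auto
    ultimately show "d / b \<le> g t" using pos(3) by (simp add: divide_le_eq mult.commute)
  qed
  ultimately show ?thesis using pos unfolding d_def[symmetric] R_def[symmetric]
    by (simp add: divide_le_eq le_divide_eq mult.commute)
qed

context conic_system
begin

lemma robust_dual_if_orthogonal_interior_dual:
  assumes A: "linear A" "A \<notin> ill_posed_set nW n2 K"
    and u: "u \<in> orthogonal_comp (range A)" "u \<in> interior (dual_cone K)"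
  shows "robust_dual A"
proof -
  have "\<not> primal_feasible K A"
    using interior_dual_cone_pos[OF u(2)] u(1) unfolding primal_feasible_def orthogonal_comp_def orthogonal_def
    by (force simp: inner_commute)
  then show ?thesis using A ill_posed_set_iff robustly_imp by blast
qed

lemma dist_to_Sigma_m_ratio_bounds:
  assumes n1: "is_norm n1" and A: "linear A" "inj A" "A \<notin> ill_posed_set nW n2 K" "robust_primal A"
    and m: "DIM('w) = m" "m < DIM('v)"
  shows "1 / opnorm nW n1 A \<le> dist_to_Sigma_m n1 n2 K m (range A) / Rdist nW n2 K A
    \<and> dist_to_Sigma_m n1 n2 K m (range A) / Rdist nW n2 K A \<le> inv_opnorm nW n1 A"
proof -
  obtain w0 :: 'w where "w0 \<noteq> 0" using ex_nonzero_euclidean by blast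
  then have Aw0: "A w0 \<noteq> 0" using A linear_injective_0 by blast
  show ?thesis unfolding dist_to_Sigma_m_def Rdist_def
  proof (rule ratio_bounds_of_INF)
    show "Sigma_m K m \<noteq> {}" using Sigma_m_nonempty m DIM_positive[where 'a='w] by simp
    show "0 \<le> subsp_dist n1 n2 (range A) L'" if "L' \<in> Sigma_m K m" for L'
      using subsp_dist_nonneg[OF n1 n2 subspace_0[OF Sigma_mD(1)[OF that]] rangeI[of A w0] Aw0] .
    show "(INF B\<in>ill_posed_set nW n2 K. opnorm nW n2 (\<lambda>w. A w - B w)) \<le> opnorm nW n1 A * subsp_dist n1 n2 (range A) L'"
      if "L' \<in> Sigma_m K m" for L'
      using Rdist_le_opnorm_mul_subsp_dist[OF n1 A(1,4) that] unfolding Rdist_def .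
    show "\<exists>L'\<in>Sigma_m K m. subsp_dist n1 n2 (range A) L' \<le> inv_opnorm nW n1 A * opnorm nW n2 (\<lambda>w. A w - B w)"
      if "B \<in> ill_posed_set nW n2 K" for B
      using subsp_dist_le_inv_opnorm_mul[OF n1 A(1,2) that m] by blast
  qed (use zero_ill_posed Rdist_pos[OF A(1,3), unfolded Rdist_def] opnorm_pos[OF nW n1 A(1) Aw0]
      inv_opnorm_pos[OF nW n1 A(1,2)] in blast)+
qed

lemma distbar_from_Sigma_m_ratio_bounds:
  assumes n1: "is_norm n1" and A: "linear A" "inj A" "A \<notin> ill_posed_set nW n2 K" "robust_dual A"
    and m: "DIM('w) = m" "m < DIM('v)"
  shows "1 / opnorm nW n1 A \<le> distbar_from_Sigma_m n1 n2 K m (range A) / Rdist nW n2 K A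
    \<and> distbar_from_Sigma_m n1 n2 K m (range A) / Rdist nW n2 K A \<le> inv_opnorm nW n1 A"
proof -
  obtain w0 :: 'w where "w0 \<noteq> 0" using ex_nonzero_euclidean by blast
  then have Aw0: "A w0 \<noteq> 0" using A linear_injective_0 by blast
  have line: "c *\<^sub>R A w0 \<in> range A" for c using linear_scale[OF A(1), of c w0] by (metis rangeI)
  show ?thesis unfolding distbar_from_Sigma_m_def Rdist_def
  proof (rule ratio_bounds_of_INF)
    show "Sigma_m K m \<noteq> {}" using Sigma_m_nonempty m DIM_positive[where 'a='w] by simp
    show "0 \<le> subsp_distbar n1 n2 L' (range A)" if L': "L' \<in> Sigma_m K m" for L'
    proof -
      obtain x where "x \<in> L'" "x \<noteq> 0" using Sigma_mD(2)[OF L'] by blast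
      then show ?thesis by (rule subsp_distbar_nonneg[OF n1 n2 Aw0 line])
    qed
    show "(INF B\<in>ill_posed_set nW n2 K. opnorm nW n2 (\<lambda>w. A w - B w)) \<le> opnorm nW n1 A * subsp_distbar n1 n2 L' (range A)"
      if "L' \<in> Sigma_m K m" for L'
      using Rdist_le_opnorm_mul_subsp_distbar[OF n1 A(1,2,4) that] unfolding Rdist_def .
    show "\<exists>L'\<in>Sigma_m K m. subsp_distbar n1 n2 L' (range A) \<le> inv_opnorm nW n1 A * opnorm nW n2 (\<lambda>w. A w - B w)"
      if "B \<in> ill_posed_set nW n2 K" for B
      using subsp_distbar_le_inv_opnorm_mul[OF n1 A(1,2) that m] by blast
  qed (use zero_ill_posed Rdist_pos[OF A(1,3), unfolded Rdist_def] opnorm_pos[OF nW n1 A(1) Aw0]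
      inv_opnorm_pos[OF nW n1 A(1,2)] in blast)+
qed

end

theorem mainTheorem5:
  fixes K :: "'v::euclidean_space set"
    and n1 n2 :: "'v \<Rightarrow> real"
    and nW :: "'w::euclidean_space \<Rightarrow> real"
    and A :: "'w \<Rightarrow> 'v"
    and L :: "'v set" and m :: nat
  assumes "regular_cone K"
    and "is_norm n1" and "is_norm n2" and "is_norm nW"
    and "DIM('w) < DIM('v)"
    and "linear A" and "A \<notin> ill_posed_set nW n2 K" and "inj A"
    and "L = range A" and "m = dim L"
  shows "(L \<inter> interior K \<noteq> {} \<longrightarrow>
           1 / opnorm nW n1 A \<le> dist_to_Sigma_m n1 n2 K m L / Rdist nW n2 K A
         \<and> dist_to_Sigma_m n1 n2 K m L / Rdist nW n2 K A \<le> inv_opnorm nW n1 A)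
       \<and> (orthogonal_comp L \<inter> interior (dual_cone K) \<noteq> {} \<longrightarrow>
           1 / opnorm nW n1 A \<le> distbar_from_Sigma_m n1 n2 K m L / Rdist nW n2 K A
         \<and> distbar_from_Sigma_m n1 n2 K m L / Rdist nW n2 K A \<le> inv_opnorm nW n1 A)"
proof -
  interpret conic_system K nW n2 using assms(1,3,4) by unfold_locales
  note A = assms(6,8,7) and L = assms(9)
  have m: "DIM('w) = m" "m < DIM('v)"
    using assms(5,10) dim_image_eq[OF A(1), of UNIV] A(2) L by (auto simp: inj_on_def)
  have "robust_primal A" if "L \<inter> interior K \<noteq> {}"
    using that robust_primal_if_interior_point[OF A(1)] unfolding L by blast
  moreover have "robust_dual A" if "orthogonal_comp L \<inter> interior (dual_cone K) \<noteq> {}"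
    using that robust_dual_if_orthogonal_interior_dual[OF A(1,3)] unfolding L by blast
  ultimately show ?thesis
    using dist_to_Sigma_m_ratio_bounds[OF assms(2) A _ m] distbar_from_Sigma_m_ratio_bounds[OF assms(2) A _ m]
    unfolding L by blast
qed

end
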